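(* Let $G=(V,E)$ be a locally finite, connected graph with symmetric edge weights and a uniformly positive measure $\mu$. Let $\alpha,\beta>1$ and let $a,b:V\to\mathbb{R}$ satisfy conditions $(A_1)$ and $(A_2)$. Then for every $\lambda>0$ the system $$-\Delta u+(\lambda a(x)+1)u=\tfrac{\alpha}{\alpha+\beta}|u|^{\alpha-2}u|v|^{\beta},\qquad -\Delta v+(\lambda b(x)+1)v=\tfrac{\beta}{\alpha+\beta}|u|^{\alpha}|v|^{\beta-2}v\quad\text{in }V$$ has a ground state solution $(u_\lambda,v_\lambda)\in H_\lambda$, i.e. a weak solution with $(u_\lambda,v_\lambda)\in\mathcal N_\lambda$ and $J_\lambda(u_\lambda,v_\lambda)=c_{\mathcal N_\lambda}$.
   Context: $G=(V,E)$: $w_{xy}=w_{yx}>0$ for each edge $xy\in E$ (write $y\sim x$); $\mu:V\to(0,\infty)$ with $\mu(x)\ge\mu_{\min}>0$ for all $x$. For $u:V\to\mathbb{R}$: $\Delta u(x)=\frac1{\mu(x)}\sum_{y\sim x}w_{xy}(u(y)-u(x))$, $\Gamma(u,v)(x)=\frac1{2\mu(x)}\sum_{y\sim x}w_{xy}(u(y)-u(x))(v(y)-v(x))$, $|\nabla u|^2=\Gamma(u,u)$, $\int_V f\,d\mu=\sum_{x\in V}\mu(x)f(x)$. $d(x,y)$ is the graph distance; a set is a bounded domain if distances between its points are uniformly bounded. $W^{1,2}(V)=\{u:\int_V(|\nabla u|^2+u^2)d\mu<\infty\}$, $H=W^{1,2}(V)\times W^{1,2}(V)$ with $\|(u,v)\|_H^2=\int_V(|\nabla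 u|^2+|\nabla v|^2+u^2+v^2)d\mu$. $(A_1)$: $a\ge0$, $b\ge0$ on $V$, and $\Omega_a=\{a=0\}$, $\Omega_b=\{b=0\}$ and $\Omega_a\cap\Omega_b$ are non-empty bounded domains. $(A_2)$: there is $x_0\in V$ with $a(x)\to+\infty$ and $b(x)\to+\infty$ as $d(x,x_0)\to\infty$. For $\lambda>0$: $H_\lambda=\{(u,v)\in H:\int_V(\lambda a u^2+\lambda b v^2)d\mu<\infty\}$ with inner product $\langle(u,v),(\xi,\eta)\rangle_{H_\lambda}=\int_V(\Gamma(u,\xi)+(\lambda a+1)u\xi+\Gamma(v,\eta)+(\lambda b+1)v\eta)d\mu$ and norm $\|\cdot\|_{H_\lambda}$. $J_\lambda(u,v)=\frac12\|(u,v)\|_{H_\lambda}^2-\frac1{\alpha+\beta}\int_V|u|^\alpha|v|^\beta d\mu$. A weak solution is $(u,v)\in H_\lambda$ with $\int_V(\Gamma(u,\xi)+\Gamma(v,\eta)+(\lambda a+1)u\xi+(\lambda b+1)v\eta)d\mu=\int_V(\frac{\alpha}{\alpha+\beta}|u|^{\alpha-2}u|v|^\beta\xi+\frac{\beta}{\alpha+\beta}|u|^\alpha|v|^{\beta-2}v\eta)d\mu$ for all $(\xi,\eta)\in H_\lambda$ (i.e. $J_\lambda'(u,v)=0$). Nehari manifold $\mathcal N_\lambda=\{(u,v)\in H_\lambda\setminus\{(0,0)\}:\langle J_\lambda'(u,v),(u,v)\rangle=0\}$, $c_{\mathcal N_\lambda}=\inf_{\mathcal N_\lambda}J_\lambda$.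 *)

theory Defs
  imports "HOL-Analysis.Analysis"
begin

text \<open>Weighted graph on the vertex type 'v (V = UNIV). The edge xy exists iff w x y > 0.\<close>

definition adj :: "('v \<Rightarrow> 'v \<Rightarrow> real) \<Rightarrow> 'v \<Rightarrow> 'v \<Rightarrow> bool" where
  "adj w x y \<longleftrightarrow> w x y > 0"

definition nbrs :: "('v \<Rightarrow> 'v \<Rightarrow> real) \<Rightarrow> 'v \<Rightarrow> 'v set" where
  "nbrs w x = {y. adj w x y}"

definition weighted_graph :: "('v \<Rightarrow> 'v \<Rightarrow> real) \<Rightarrow> bool" where
  "weighted_graph w \<longleftrightarrow> (\<forall>x y. w x y \<ge> 0 \<and> w x y = w y x)"

definition locally_finite :: "('v \<Rightarrow> 'v \<Rightarrow> real) \<Rightarrow> bool" where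
  "locally_finite w \<longleftrightarrow> (\<forall>x. finite (nbrs w x))"

definition connected_graph :: "('v \<Rightarrow> 'v \<Rightarrow> real) \<Rightarrow> bool" where
  "connected_graph w \<longleftrightarrow> (\<forall>x y. (adj w)\<^sup>*\<^sup>* x y)"

definition graph_dist :: "('v \<Rightarrow> 'v \<Rightarrow> real) \<Rightarrow> 'v \<Rightarrow> 'v \<Rightarrow> nat" where
  "graph_dist w x y = (LEAST n. (adj w ^^ n) x y)"

definition bounded_domain :: "('v \<Rightarrow> 'v \<Rightarrow> real) \<Rightarrow> 'v set \<Rightarrow> bool" where
  "bounded_domain w S \<longleftrightarrow> (\<exists>R. \<forall>x\<in>S. \<forall>y\<in>S. graph_dist w x y \<le> R)"

definition laplacian :: "('v \<Rightarrow> 'v \<Rightarrow> real) \<Rightarrow> ('v \<Rightarrow> real) \<Rightarrow> ('v \<Rightarrow> real) \<Rightarrow> 'v \<Rightarrow> real" where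
  "laplacian w \<mu> u x = (1 / \<mu> x) * (\<Sum>y\<in>nbrs w x. w x y * (u y - u x))"

definition Gamma :: "('v \<Rightarrow> 'v \<Rightarrow> real) \<Rightarrow> ('v \<Rightarrow> real) \<Rightarrow> ('v \<Rightarrow> real) \<Rightarrow> ('v \<Rightarrow> real) \<Rightarrow> 'v \<Rightarrow> real" where
  "Gamma w \<mu> u v x = (1 / (2 * \<mu> x)) * (\<Sum>y\<in>nbrs w x. w x y * (u y - u x) * (v y - v x))"

definition grad_sq :: "('v \<Rightarrow> 'v \<Rightarrow> real) \<Rightarrow> ('v \<Rightarrow> real) \<Rightarrow> ('v \<Rightarrow> real) \<Rightarrow> 'v \<Rightarrow> real" where
  "grad_sq w \<mu> u = Gamma w \<mu> u u"

text \<open>Integration against \<mu>: \<open>\<Sum>x. \<mu>(x) f(x)\<close>, integrable = (absolutely) summable.\<close>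
definition mu_integrable :: "('v \<Rightarrow> real) \<Rightarrow> ('v \<Rightarrow> real) \<Rightarrow> bool" where
  "mu_integrable \<mu> f \<longleftrightarrow> (\<lambda>x. \<mu> x * f x) summable_on UNIV"

definition mu_integral :: "('v \<Rightarrow> real) \<Rightarrow> ('v \<Rightarrow> real) \<Rightarrow> real" where
  "mu_integral \<mu> f = infsum (\<lambda>x. \<mu> x * f x) UNIV"

definition W12 :: "('v \<Rightarrow> 'v \<Rightarrow> real) \<Rightarrow> ('v \<Rightarrow> real) \<Rightarrow> ('v \<Rightarrow> real) \<Rightarrow> bool" where
  "W12 w \<mu> u \<longleftrightarrow> mu_integrable \<mu> (\<lambda>x. grad_sq w \<mu> u x + (u x)\<^sup>2)"

definition H_lambda :: "('v \<Rightarrow> 'v \<Rightarrow> real) \<Rightarrow> ('v \<Rightarrow> real) \<Rightarrow> ('v \<Rightarrow> real) \<Rightarrow> ('v \<Rightarrow> real)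
    \<Rightarrow> real \<Rightarrow> (('v \<Rightarrow> real) \<times> ('v \<Rightarrow> real)) set" where
  "H_lambda w \<mu> a b lam = {(u, v). W12 w \<mu> u \<and> W12 w \<mu> v \<and>
      mu_integrable \<mu> (\<lambda>x. lam * a x * (u x)\<^sup>2 + lam * b x * (v x)\<^sup>2)}"

definition H_inner :: "('v \<Rightarrow> 'v \<Rightarrow> real) \<Rightarrow> ('v \<Rightarrow> real) \<Rightarrow> ('v \<Rightarrow> real) \<Rightarrow> ('v \<Rightarrow> real)
    \<Rightarrow> real \<Rightarrow> ('v \<Rightarrow> real) \<times> ('v \<Rightarrow> real) \<Rightarrow> ('v \<Rightarrow> real) \<times> ('v \<Rightarrow> real) \<Rightarrow> real" where
  "H_inner w \<mu> a b lam p q = (case p of (u, v) \<Rightarrow> case q of (\<xi>, \<eta>) \<Rightarrow>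
      mu_integral \<mu> (\<lambda>x. Gamma w \<mu> u \<xi> x + (lam * a x + 1) * u x * \<xi> x
                       + Gamma w \<mu> v \<eta> x + (lam * b x + 1) * v x * \<eta> x))"

definition H_norm_sq :: "('v \<Rightarrow> 'v \<Rightarrow> real) \<Rightarrow> ('v \<Rightarrow> real) \<Rightarrow> ('v \<Rightarrow> real) \<Rightarrow> ('v \<Rightarrow> real)
    \<Rightarrow> real \<Rightarrow> ('v \<Rightarrow> real) \<times> ('v \<Rightarrow> real) \<Rightarrow> real" where
  "H_norm_sq w \<mu> a b lam p = H_inner w \<mu> a b lam p p"

definition J_lambda :: "('v \<Rightarrow> 'v \<Rightarrow> real) \<Rightarrow> ('v \<Rightarrow> real) \<Rightarrow> ('v \<Rightarrow> real) \<Rightarrow> ('v \<Rightarrow> real)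
    \<Rightarrow> real \<Rightarrow> real \<Rightarrow> real \<Rightarrow> ('v \<Rightarrow> real) \<times> ('v \<Rightarrow> real) \<Rightarrow> real" where
  "J_lambda w \<mu> a b lam \<alpha> \<beta> p = (case p of (u, v) \<Rightarrow>
      H_norm_sq w \<mu> a b lam (u, v) / 2
      - (1 / (\<alpha> + \<beta>)) * mu_integral \<mu> (\<lambda>x. \<bar>u x\<bar> powr \<alpha> * \<bar>v x\<bar> powr \<beta>))"

text \<open>\<open>\<langle>J'(u,v),(\<xi>,\<eta>)\<rangle>\<close>; note \<open>|u|^{\<alpha>-2} u\<close> is read as 0 at u = 0 (0 powr _ = 0).\<close>
definition J_deriv :: "('v \<Rightarrow> 'v \<Rightarrow> real) \<Rightarrow> ('v \<Rightarrow> real) \<Rightarrow> ('v \<Rightarrow> real) \<Rightarrow> ('v \<Rightarrow> real)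
    \<Rightarrow> real \<Rightarrow> real \<Rightarrow> real \<Rightarrow> ('v \<Rightarrow> real) \<times> ('v \<Rightarrow> real) \<Rightarrow> ('v \<Rightarrow> real) \<times> ('v \<Rightarrow> real) \<Rightarrow> real" where
  "J_deriv w \<mu> a b lam \<alpha> \<beta> p q = (case p of (u, v) \<Rightarrow> case q of (\<xi>, \<eta>) \<Rightarrow>
      H_inner w \<mu> a b lam (u, v) (\<xi>, \<eta>)
      - mu_integral \<mu> (\<lambda>x. \<alpha> / (\<alpha> + \<beta>) * \<bar>u x\<bar> powr (\<alpha> - 2) * u x * \<bar>v x\<bar> powr \<beta> * \<xi> x
                       + \<beta> / (\<alpha> + \<beta>) * \<bar>u x\<bar> powr \<alpha> * \<bar>v x\<bar> powr (\<beta> - 2) * v x * \<eta> x))"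

definition weak_solution :: "('v \<Rightarrow> 'v \<Rightarrow> real) \<Rightarrow> ('v \<Rightarrow> real) \<Rightarrow> ('v \<Rightarrow> real) \<Rightarrow> ('v \<Rightarrow> real)
    \<Rightarrow> real \<Rightarrow> real \<Rightarrow> real \<Rightarrow> ('v \<Rightarrow> real) \<times> ('v \<Rightarrow> real) \<Rightarrow> bool" where
  "weak_solution w \<mu> a b lam \<alpha> \<beta> p \<longleftrightarrow> p \<in> H_lambda w \<mu> a b lam \<and>
      (\<forall>q\<in>H_lambda w \<mu> a b lam. J_deriv w \<mu> a b lam \<alpha> \<beta> p q = 0)"

definition nehari :: "('v \<Rightarrow> 'v \<Rightarrow> real) \<Rightarrow> ('v \<Rightarrow> real) \<Rightarrow> ('v \<Rightarrow> real) \<Rightarrow> ('v \<Rightarrow> real)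
    \<Rightarrow> real \<Rightarrow> real \<Rightarrow> real \<Rightarrow> (('v \<Rightarrow> real) \<times> ('v \<Rightarrow> real)) set" where
  "nehari w \<mu> a b lam \<alpha> \<beta> = {p \<in> H_lambda w \<mu> a b lam. p \<noteq> ((\<lambda>_. 0), (\<lambda>_. 0)) \<and>
      J_deriv w \<mu> a b lam \<alpha> \<beta> p p = 0}"

definition c_nehari :: "('v \<Rightarrow> 'v \<Rightarrow> real) \<Rightarrow> ('v \<Rightarrow> real) \<Rightarrow> ('v \<Rightarrow> real) \<Rightarrow> ('v \<Rightarrow> real)
    \<Rightarrow> real \<Rightarrow> real \<Rightarrow> real \<Rightarrow> real" where
  "c_nehari w \<mu> a b lam \<alpha> \<beta> = Inf (J_lambda w \<mu> a b lam \<alpha> \<beta> ` nehari w \<mu> a b lam \<alpha> \<beta>)"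

definition cond_A1 :: "('v \<Rightarrow> 'v \<Rightarrow> real) \<Rightarrow> ('v \<Rightarrow> real) \<Rightarrow> ('v \<Rightarrow> real) \<Rightarrow> bool" where
  "cond_A1 w a b \<longleftrightarrow> (\<forall>x. a x \<ge> 0 \<and> b x \<ge> 0) \<and>
     {x. a x = 0} \<noteq> {} \<and> bounded_domain w {x. a x = 0} \<and>
     {x. b x = 0} \<noteq> {} \<and> bounded_domain w {x. b x = 0} \<and>
     {x. a x = 0} \<inter> {x. b x = 0} \<noteq> {} \<and> bounded_domain w ({x. a x = 0} \<inter> {x. b x = 0})"

definition cond_A2 :: "('v \<Rightarrow> 'v \<Rightarrow> real) \<Rightarrow> ('v \<Rightarrow> real) \<Rightarrow> ('v \<Rightarrow> real) \<Rightarrow> bool" where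
  "cond_A2 w a b \<longleftrightarrow> (\<exists>x0. \<forall>M::real. \<exists>R::nat. \<forall>x. graph_dist w x x0 \<ge> R \<longrightarrow> a x \<ge> M \<and> b x \<ge> M)"

end

theory Submission
  imports Defs
begin

text \<open>Since \<open>\<alpha> + \<beta> > 2\<close>, every \<open>(u, v)\<close> with \<open>B(u, v) = \<integral>|u|\<^sup>\<alpha>|v|\<^sup>\<beta> d\<mu> > 0\<close> has a unique
  positive multiple on the Nehari manifold, and there \<open>J\<^sub>\<lambda> = (1/2 - 1/(\<alpha>+\<beta>)) \<parallel>(u, v)\<parallel>\<^sup>2\<close>.
  A minimizing sequence is therefore bounded in \<open>H\<^sub>\<lambda>\<close>, hence (as \<open>\<mu> \<ge> \<mu>\<^sub>m\<^sub>i\<^sub>n\<close>) uniformly bounded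
  pointwise, and on the countable vertex set a subsequence converges pointwise. The norm is
  lower semicontinuous under pointwise convergence, and \<open>(A\<^sub>2)\<close> makes the tails of \<open>B\<close> uniformly
  small because \<open>a, b \<ge> M\<close> off a finite set; so \<open>B\<close> passes to the limit, and the limit lies on
  the manifold and attains \<open>c\<^sub>\<N>\<^sub>\<lambda>\<close>. It is a critical point because along any line \<open>p + s q\<close>,
  \<open>J\<^sub>\<lambda>\<close> at the Nehari projection is an increasing function of
  \<open>(\<alpha>+\<beta>) log \<parallel>p + s q\<parallel>\<^sup>2 - 2 log B(p + s q)\<close>, which is therefore minimal at \<open>s = 0\<close>.\<close>

lemma powr_le_powr_diff_mult:
  fixes m L e k :: real
  assumes "0 \<le> m" "m \<le> L" "0 \<le> k" "k \<le> e"
  shows "m powr e \<le> L powr (e - k) * m powr k"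
proof (cases "m = 0")
  case True
  then show ?thesis by simp
next
  case False
  then have "m > 0" using assms by simp
  have "m powr e = m powr (e - k) * m powr k" by (simp add: powr_add[symmetric])
  also have "\<dots> \<le> L powr (e - k) * m powr k"
    by (intro mult_right_mono powr_mono2) (use assms \<open>m > 0\<close> in auto)
  finally show ?thesis .
qed

lemma powr_mult_powr_le:
  fixes A B m e1 e2 :: real
  assumes "0 \<le> A" "A \<le> m" "0 \<le> B" "B \<le> m" "0 \<le> e1" "0 \<le> e2"
  shows "A powr e1 * B powr e2 \<le> m powr (e1 + e2)"
proof -
  have "A powr e1 * B powr e2 \<le> m powr e1 * m powr e2"
    by (intro mult_mono powr_mono2) (use assms in auto)
  also have "\<dots> = m powr (e1 + e2)" by (simp add: powr_add)
  finally show ?thesis .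
qed

lemma abs_powr_mult_abs_powr_le_sq:
  fixes s t L \<alpha> \<beta> :: real
  assumes "\<bar>s\<bar> \<le> L" "\<bar>t\<bar> \<le> L" "\<alpha> > 1" "\<beta> > 1"
  shows "\<bar>s\<bar> powr \<alpha> * \<bar>t\<bar> powr \<beta> \<le> L powr (\<alpha> + \<beta> - 2) * (s\<^sup>2 + t\<^sup>2)"
proof -
  define m where "m = max \<bar>s\<bar> \<bar>t\<bar>"
  have m: "0 \<le> m" "\<bar>s\<bar> \<le> m" "\<bar>t\<bar> \<le> m" "m \<le> L" using assms unfolding m_def by auto
  have "\<bar>s\<bar> powr \<alpha> * \<bar>t\<bar> powr \<beta> \<le> m powr (\<alpha> + \<beta>)"
    by (rule powr_mult_powr_le) (use m assms in auto)
  also have "\<dots> \<le> L powr (\<alpha> + \<beta> - 2) * m powr 2"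
    by (rule powr_le_powr_diff_mult) (use m assms in auto)
  also have "m powr 2 \<le> s\<^sup>2 + t\<^sup>2"
    using m(1) unfolding m_def by (cases "\<bar>s\<bar> \<le> \<bar>t\<bar>") (auto simp: max_def)
  then have "L powr (\<alpha> + \<beta> - 2) * m powr 2 \<le> L powr (\<alpha> + \<beta> - 2) * (s\<^sup>2 + t\<^sup>2)"
    by (rule mult_left_mono) simp
  finally show ?thesis .
qed

lemma abs_signed_powr: "\<bar>\<bar>y\<bar> powr (e - 2) * y\<bar> = \<bar>y\<bar> powr (e - 1)" for y e :: real
proof (cases "y = 0")
  case True
  then show ?thesis by simp
next
  case False
  have "\<bar>\<bar>y\<bar> powr (e - 2) * y\<bar> = \<bar>y\<bar> powr (e - 2) * \<bar>y\<bar> powr 1"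
    by (simp add: abs_mult)
  also have "\<dots> = \<bar>y\<bar> powr (e - 2 + 1)" by (rule powr_add[symmetric])
  finally show ?thesis by simp
qed

lemma signed_powr_mult_self: "\<bar>y\<bar> powr (e - 2) * y * y = \<bar>y\<bar> powr e" for y e :: real
proof (cases "y = 0")
  case True
  then show ?thesis by simp
next
  case False
  have "\<bar>y\<bar> powr (e - 2) * y * y = \<bar>y\<bar> powr (e - 2) * \<bar>y\<bar> powr 2"
    by (simp add: power2_eq_square)
  also have "\<dots> = \<bar>y\<bar> powr (e - 2 + 2)" by (rule powr_add[symmetric])
  finally show ?thesis by simp
qed

lemma has_real_derivative_abs_powr_pos:
  fixes e y :: real
  assumes "e > 1" "y > 0"
  shows "((\<lambda>z. \<bar>z\<bar> powr e) has_real_derivative e * (\<bar>y\<bar> powr (e - 2) * y)) (at y)"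
proof -
  have ev: "\<forall>\<^sub>F z in nhds y. z powr e = \<bar>z\<bar> powr e"
    using eventually_nhds_in_open[of "{0<..}" y] assms(2) by (auto elim!: eventually_mono)
  have "((\<lambda>z. z powr e) has_real_derivative e * y powr (e - 1)) (at y)"
    using assms(2) by (rule has_real_derivative_powr)
  moreover have "e * y powr (e - 1) = e * (\<bar>y\<bar> powr (e - 2) * y)"
    using assms(2) abs_signed_powr[of y e] by simp
  ultimately show ?thesis
    using DERIV_cong_ev[OF refl ev refl] by simp
qed

lemma has_real_derivative_abs_powr_neg:
  fixes e y :: real
  assumes "e > 1" "y < 0"
  shows "((\<lambda>z. \<bar>z\<bar> powr e) has_real_derivative e * (\<bar>y\<bar> powr (e - 2) * y)) (at y)"
proof -
  have "((\<lambda>z. \<bar>z\<bar> powr e) has_real_derivative e * (\<bar>- y\<bar> powr (e - 2) * - y) * -1) (at y)"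
    using DERIV_chain'[OF DERIV_minus[OF DERIV_ident]
        has_real_derivative_abs_powr_pos[OF assms(1), of "- y"]] assms(2)
    by simp
  then show ?thesis by simp
qed

lemma has_real_derivative_abs_powr_zero:
  fixes e :: real
  assumes "e > 1"
  shows "((\<lambda>z. \<bar>z\<bar> powr e) has_real_derivative 0) (at 0)"
proof -
  have "((\<lambda>h. \<bar>h\<bar> powr (e - 1)) \<longlongrightarrow> \<bar>0::real\<bar> powr (e - 1)) (at 0)"
    by (rule tendsto_powr2[OF tendsto_rabs[OF tendsto_ident_at] tendsto_const]) (use assms in auto)
  moreover have "(\<lambda>h. \<bar>\<bar>h\<bar> powr e / h\<bar>) = (\<lambda>h. \<bar>h\<bar> powr (e - 1))"
  proof
    show "\<bar>\<bar>h\<bar> powr e / h\<bar> = \<bar>h\<bar> powr (e - 1)" for h :: real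
      by (cases "h = 0") (use assms in \<open>simp_all add: abs_divide powr_diff\<close>)
  qed
  ultimately have "((\<lambda>h. \<bar>\<bar>h\<bar> powr e / h\<bar>) \<longlongrightarrow> 0) (at 0)" by simp
  then have "((\<lambda>h. \<bar>h\<bar> powr e / h) \<longlongrightarrow> 0) (at 0)" by (rule tendsto_rabs_zero_iff[THEN iffD1])
  then show ?thesis by (simp add: DERIV_def)
qed

lemma has_real_derivative_abs_powr:
  fixes e y :: real
  assumes "e > 1"
  shows "((\<lambda>z. \<bar>z\<bar> powr e) has_real_derivative e * (\<bar>y\<bar> powr (e - 2) * y)) (at y)"
  using has_real_derivative_abs_powr_pos[OF assms] has_real_derivative_abs_powr_neg[OF assms]
    has_real_derivative_abs_powr_zero[OF assms]
  by (cases y "0::real" rule: linorder_cases) auto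

definition coupling_line :: "real \<Rightarrow> real \<Rightarrow> real \<Rightarrow> real \<Rightarrow> real \<Rightarrow> real \<Rightarrow> real \<Rightarrow> real" where
  "coupling_line \<alpha> \<beta> u \<xi> v \<eta> s = \<bar>u + s * \<xi>\<bar> powr \<alpha> * \<bar>v + s * \<eta>\<bar> powr \<beta>"

definition coupling_line_deriv :: "real \<Rightarrow> real \<Rightarrow> real \<Rightarrow> real \<Rightarrow> real \<Rightarrow> real \<Rightarrow> real \<Rightarrow> real" where
  "coupling_line_deriv \<alpha> \<beta> u \<xi> v \<eta> s =
     \<alpha> * (\<bar>u + s * \<xi>\<bar> powr (\<alpha> - 2) * (u + s * \<xi>)) * \<xi> * \<bar>v + s * \<eta>\<bar> powr \<beta>
     + \<beta> * (\<bar>v + s * \<eta>\<bar> powr (\<beta> - 2) * (v + s * \<eta>)) * \<eta> * \<bar>u + s * \<xi>\<bar> powr \<alpha>"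

lemma has_real_derivative_coupling_line:
  assumes "\<alpha> > 1" "\<beta> > 1"
  shows "(coupling_line \<alpha> \<beta> u \<xi> v \<eta> has_real_derivative coupling_line_deriv \<alpha> \<beta> u \<xi> v \<eta> \<sigma>) (at \<sigma>)"
proof -
  have line: "((\<lambda>s. c + s * d) has_real_derivative d) (at \<sigma>)" for c d :: real
    by (auto intro!: derivative_eq_intros)
  have "((\<lambda>s. \<bar>u + s * \<xi>\<bar> powr \<alpha>) has_real_derivative
      \<alpha> * (\<bar>u + \<sigma> * \<xi>\<bar> powr (\<alpha> - 2) * (u + \<sigma> * \<xi>)) * \<xi>) (at \<sigma>)"
    by (rule DERIV_chain'[OF line has_real_derivative_abs_powr[OF assms(1)]])
  moreover have "((\<lambda>s. \<bar>v + s * \<eta>\<bar> powr \<beta>) has_real_derivative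
      \<beta> * (\<bar>v + \<sigma> * \<eta>\<bar> powr (\<beta> - 2) * (v + \<sigma> * \<eta>)) * \<eta>) (at \<sigma>)"
    by (rule DERIV_chain'[OF line has_real_derivative_abs_powr[OF assms(2)]])
  ultimately show ?thesis
    unfolding coupling_line_def coupling_line_deriv_def by (rule DERIV_mult)
qed

lemma abs_signed_powr_term:
  fixes c y z W e g :: real
  assumes "c > 0"
  shows "\<bar>c * (\<bar>y\<bar> powr (e - 2) * y) * z * \<bar>W\<bar> powr g\<bar> = c * \<bar>z\<bar> * (\<bar>y\<bar> powr (e - 1) * \<bar>W\<bar> powr g)"
proof -
  have "\<bar>c * (\<bar>y\<bar> powr (e - 2) * y) * z * \<bar>W\<bar> powr g\<bar>
      = \<bar>c\<bar> * \<bar>\<bar>y\<bar> powr (e - 2) * y\<bar> * \<bar>z\<bar> * \<bar>\<bar>W\<bar> powr g\<bar>"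
    by (simp only: abs_mult)
  then show ?thesis unfolding abs_signed_powr using assms by (simp add: mult_ac)
qed

lemma abs_coupling_line_deriv_le:
  assumes \<alpha>: "\<alpha> > 1" and \<beta>: "\<beta> > 1" and \<sigma>: "\<bar>\<sigma>\<bar> \<le> 1"
    and L: "\<bar>u\<bar> + \<bar>\<xi>\<bar> + \<bar>v\<bar> + \<bar>\<eta>\<bar> \<le> L"
  shows "\<bar>coupling_line_deriv \<alpha> \<beta> u \<xi> v \<eta> \<sigma>\<bar>
           \<le> (\<alpha> + \<beta>) * L powr (\<alpha> + \<beta> - 2) * (\<bar>u\<bar> + \<bar>\<xi>\<bar> + \<bar>v\<bar> + \<bar>\<eta>\<bar>)\<^sup>2"
proof -
  define m where "m = \<bar>u\<bar> + \<bar>\<xi>\<bar> + \<bar>v\<bar> + \<bar>\<eta>\<bar>"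
  let ?K = "L powr (\<alpha> + \<beta> - 2)"
  have m0: "0 \<le> m" and mL: "m \<le> L" and \<xi>m: "\<bar>\<xi>\<bar> \<le> m" and \<eta>m: "\<bar>\<eta>\<bar> \<le> m"
    using L unfolding m_def by auto
  have "\<bar>\<sigma> * \<xi>\<bar> \<le> \<bar>\<xi>\<bar>" "\<bar>\<sigma> * \<eta>\<bar> \<le> \<bar>\<eta>\<bar>"
    using \<sigma> by (simp_all add: abs_mult mult_left_le_one_le)
  then have y1: "\<bar>u + \<sigma> * \<xi>\<bar> \<le> m" and y2: "\<bar>v + \<sigma> * \<eta>\<bar> \<le> m"
    unfolding m_def by linarith+
  have "m powr (\<alpha> + \<beta> - 1) \<le> L powr (\<alpha> + \<beta> - 1 - 1) * m powr 1"
    by (rule powr_le_powr_diff_mult) (use m0 mL \<alpha> \<beta> in auto)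
  then have key: "m powr (\<alpha> + \<beta> - 1) \<le> ?K * m"
    using powr_one[OF m0] by (simp add: algebra_simps)
  have "\<bar>u + \<sigma> * \<xi>\<bar> powr (\<alpha> - 1) * \<bar>v + \<sigma> * \<eta>\<bar> powr \<beta> \<le> m powr (\<alpha> - 1 + \<beta>)"
    by (rule powr_mult_powr_le) (use y1 y2 \<alpha> \<beta> in auto)
  then have t1: "\<bar>\<xi>\<bar> * (\<bar>u + \<sigma> * \<xi>\<bar> powr (\<alpha> - 1) * \<bar>v + \<sigma> * \<eta>\<bar> powr \<beta>) \<le> m * (?K * m)"
    using key by (intro mult_mono[OF \<xi>m]) (simp_all add: algebra_simps m0)
  have "\<bar>v + \<sigma> * \<eta>\<bar> powr (\<beta> - 1) * \<bar>u + \<sigma> * \<xi>\<bar> powr \<alpha> \<le> m powr (\<beta> - 1 + \<alpha>)"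
    by (rule powr_mult_powr_le) (use y1 y2 \<alpha> \<beta> in auto)
  then have t2: "\<bar>\<eta>\<bar> * (\<bar>v + \<sigma> * \<eta>\<bar> powr (\<beta> - 1) * \<bar>u + \<sigma> * \<xi>\<bar> powr \<alpha>) \<le> m * (?K * m)"
    using key by (intro mult_mono[OF \<eta>m]) (simp_all add: algebra_simps m0)
  have "\<bar>coupling_line_deriv \<alpha> \<beta> u \<xi> v \<eta> \<sigma>\<bar>
      \<le> \<alpha> * (\<bar>\<xi>\<bar> * (\<bar>u + \<sigma> * \<xi>\<bar> powr (\<alpha> - 1) * \<bar>v + \<sigma> * \<eta>\<bar> powr \<beta>))
        + \<beta> * (\<bar>\<eta>\<bar> * (\<bar>v + \<sigma> * \<eta>\<bar> powr (\<beta> - 1) * \<bar>u + \<sigma> * \<xi>\<bar> powr \<alpha>))"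
    unfolding coupling_line_deriv_def
    using abs_triangle_ineq[of
        "\<alpha> * (\<bar>u + \<sigma> * \<xi>\<bar> powr (\<alpha> - 2) * (u + \<sigma> * \<xi>)) * \<xi> * \<bar>v + \<sigma> * \<eta>\<bar> powr \<beta>"
        "\<beta> * (\<bar>v + \<sigma> * \<eta>\<bar> powr (\<beta> - 2) * (v + \<sigma> * \<eta>)) * \<eta> * \<bar>u + \<sigma> * \<xi>\<bar> powr \<alpha>"]
      abs_signed_powr_term[of \<alpha> "u + \<sigma> * \<xi>" \<alpha> \<xi> "v + \<sigma> * \<eta>" \<beta>]
      abs_signed_powr_term[of \<beta> "v + \<sigma> * \<eta>" \<beta> \<eta> "u + \<sigma> * \<xi>" \<alpha>] \<alpha> \<beta>
    by (simp add: mult.assoc)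
  also have "\<dots> \<le> \<alpha> * (m * (?K * m)) + \<beta> * (m * (?K * m))"
    using t1 t2 \<alpha> \<beta> by (intro add_mono mult_left_mono) auto
  also have "\<dots> = (\<alpha> + \<beta>) * ?K * m\<^sup>2" by (simp add: algebra_simps power2_eq_square)
  finally show ?thesis unfolding m_def .
qed

lemma abs_coupling_line_diff_quotient_le:
  assumes "\<alpha> > 1" "\<beta> > 1" "\<bar>s\<bar> < 1" "s \<noteq> 0"
    and "\<bar>u\<bar> + \<bar>\<xi>\<bar> + \<bar>v\<bar> + \<bar>\<eta>\<bar> \<le> L"
  shows "\<bar>(coupling_line \<alpha> \<beta> u \<xi> v \<eta> s - coupling_line \<alpha> \<beta> u \<xi> v \<eta> 0) / s\<bar>
           \<le> (\<alpha> + \<beta>) * L powr (\<alpha> + \<beta> - 2) * (\<bar>u\<bar> + \<bar>\<xi>\<bar> + \<bar>v\<bar> + \<bar>\<eta>\<bar>)\<^sup>2"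
proof -
  let ?f = "coupling_line \<alpha> \<beta> u \<xi> v \<eta>" and ?f' = "coupling_line_deriv \<alpha> \<beta> u \<xi> v \<eta>"
  have D: "\<And>x. (?f has_real_derivative ?f' x) (at x)"
    by (rule has_real_derivative_coupling_line[OF assms(1,2)])
  obtain z where "\<bar>z\<bar> \<le> 1" "(?f s - ?f 0) / s = ?f' z"
  proof (cases "s > 0")
    case True
    then obtain z where "0 < z" "z < s" "?f s - ?f 0 = (s - 0) * ?f' z"
      using MVT2[OF _ D] by blast
    then show ?thesis using that[of z] assms(3) by auto
  next
    case False
    then have "s < 0" using assms(4) by simp
    then obtain z where "s < z" "z < 0" "?f 0 - ?f s = (0 - s) * ?f' z"
      using MVT2[OF _ D] by blast
    then show ?thesis using that[of z] assms(3) \<open>s < 0\<close> by (auto simp: field_simps)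
  qed
  then show ?thesis using abs_coupling_line_deriv_le[OF assms(1,2) _ assms(5)] by simp
qed

lemma sum_four_sq_le: "(a + b + c + d)\<^sup>2 \<le> 4 * (a\<^sup>2 + b\<^sup>2 + c\<^sup>2 + d\<^sup>2)" for a b c d :: real
proof -
  have "4 * (a\<^sup>2 + b\<^sup>2 + c\<^sup>2 + d\<^sup>2) - (a + b + c + d)\<^sup>2
      = (a - b)\<^sup>2 + (a - c)\<^sup>2 + (a - d)\<^sup>2 + (b - c)\<^sup>2 + (b - d)\<^sup>2 + (c - d)\<^sup>2"
    by (simp add: power2_eq_square algebra_simps)
  moreover have "(a - b)\<^sup>2 + (a - c)\<^sup>2 + (a - d)\<^sup>2 + (b - c)\<^sup>2 + (b - d)\<^sup>2 + (c - d)\<^sup>2 \<ge> 0"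
    by simp
  ultimately show ?thesis by linarith
qed

lemma infsum_UNIV_split_finite:
  fixes h :: "'b \<Rightarrow> real"
  assumes "h summable_on UNIV" "finite S"
  shows "infsum h UNIV = sum h S + infsum h (-S)"
proof -
  have "infsum h (S \<union> -S) = infsum h S + infsum h (-S)"
    by (rule infsum_Un_disjoint) (auto intro: summable_on_subset[OF assms(1)] simp: assms(2))
  then show ?thesis using assms(2) by simp
qed

lemma abs_infsum_le_infsum_abs:
  fixes h :: "'b \<Rightarrow> real"
  assumes "h summable_on A"
  shows "\<bar>infsum h A\<bar> \<le> infsum (\<lambda>x. \<bar>h x\<bar>) A"
  using norm_infsum_bound[of h A] assms summable_on_iff_abs_summable_on_real by auto

lemma tendsto_infsum_uniform_tails:
  fixes f :: "'a \<Rightarrow> 'b \<Rightarrow> real" and g :: "'b \<Rightarrow> real"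
  assumes summable: "\<forall>\<^sub>F s in F. f s summable_on UNIV" "g summable_on UNIV"
    and pointwise: "\<And>x. ((\<lambda>s. f s x) \<longlongrightarrow> g x) F"
    and tails: "\<And>\<epsilon>. \<epsilon> > 0 \<Longrightarrow> \<exists>S. finite S \<and> (\<forall>\<^sub>F s in F. infsum (\<lambda>x. \<bar>f s x\<bar>) (-S) \<le> \<epsilon>)
                  \<and> infsum (\<lambda>x. \<bar>g x\<bar>) (-S) \<le> \<epsilon>"
  shows "((\<lambda>s. infsum (f s) UNIV) \<longlongrightarrow> infsum g UNIV) F"
proof (rule tendstoI)
  fix e :: real
  assume "e > 0"
  then obtain S where S: "finite S" and tf: "\<forall>\<^sub>F s in F. infsum (\<lambda>x. \<bar>f s x\<bar>) (-S) \<le> e/3"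
    and tg: "infsum (\<lambda>x. \<bar>g x\<bar>) (-S) \<le> e/3"
    using tails[of "e/3"] by auto
  have "((\<lambda>s. \<Sum>x\<in>S. f s x) \<longlongrightarrow> (\<Sum>x\<in>S. g x)) F"
    by (rule tendsto_sum) (rule pointwise)
  then have ts: "\<forall>\<^sub>F s in F. dist (\<Sum>x\<in>S. f s x) (\<Sum>x\<in>S. g x) < e/3"
    using \<open>e > 0\<close> by (intro tendstoD) auto
  have gsplit: "infsum g UNIV = sum g S + infsum g (-S)"
    by (rule infsum_UNIV_split_finite[OF summable(2) S])
  have gt: "\<bar>infsum g (-S)\<bar> \<le> e/3"
    using abs_infsum_le_infsum_abs[OF summable_on_subset[OF summable(2), of "-S"]] tg by simp
  show "\<forall>\<^sub>F s in F. dist (infsum (f s) UNIV) (infsum g UNIV) < e"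
    using summable(1) tf ts
  proof eventually_elim
    case (elim s)
    have fsplit: "infsum (f s) UNIV = sum (f s) S + infsum (f s) (-S)"
      by (rule infsum_UNIV_split_finite[OF elim(1) S])
    have ft: "\<bar>infsum (f s) (-S)\<bar> \<le> e/3"
      using abs_infsum_le_infsum_abs[OF summable_on_subset[OF elim(1), of "-S"]] elim(2) by simp
    have "\<bar>sum (f s) S - sum g S\<bar> < e/3" using elim(3) by (simp add: dist_real_def)
    then show ?case using fsplit gsplit ft gt unfolding dist_real_def abs_less_iff abs_le_iff
      by linarith
  qed
qed

lemma tendsto_infsum_dominated:
  fixes f :: "'a \<Rightarrow> 'b \<Rightarrow> real" and g d :: "'b \<Rightarrow> real"
  assumes "F \<noteq> bot"
    and dom: "\<forall>\<^sub>F s in F. \<forall>x. \<bar>f s x\<bar> \<le> d x"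
    and d: "d summable_on UNIV"
    and pointwise: "\<And>x. ((\<lambda>s. f s x) \<longlongrightarrow> g x) F"
  shows "((\<lambda>s. infsum (f s) UNIV) \<longlongrightarrow> infsum g UNIV) F"
proof -
  have gd: "\<bar>g x\<bar> \<le> d x" for x
  proof (rule tendsto_le[OF assms(1) tendsto_const])
    show "((\<lambda>s. \<bar>f s x\<bar>) \<longlongrightarrow> \<bar>g x\<bar>) F" by (rule tendsto_rabs[OF pointwise])
    show "\<forall>\<^sub>F s in F. \<bar>f s x\<bar> \<le> d x" using dom by eventually_elim auto
  qed
  have dominated_summable: "(\<lambda>x. \<bar>h x\<bar>) summable_on A"
    if "\<And>x. \<bar>h x\<bar> \<le> d x" for h :: "'b \<Rightarrow> real" and A
  proof (rule summable_on_comparison_test)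
    show "d summable_on A" by (rule summable_on_subset[OF d]) auto
  qed (use that in auto)
  then have summable: "h summable_on UNIV" if "\<And>x. \<bar>h x\<bar> \<le> d x" for h :: "'b \<Rightarrow> real"
    using that summable_on_iff_abs_summable_on_real by fastforce
  show ?thesis
  proof (rule tendsto_infsum_uniform_tails[OF _ summable[OF gd] pointwise])
    show "\<forall>\<^sub>F s in F. f s summable_on UNIV" using dom by eventually_elim (rule summable, auto)
  next
    fix \<epsilon> :: real
    assume "\<epsilon> > 0"
    then obtain S where S: "finite S" "dist (sum d S) (infsum d UNIV) \<le> \<epsilon>"
      using infsum_finite_approximation[OF d] by auto
    have "infsum d (-S) \<le> \<epsilon>"
      using infsum_UNIV_split_finite[OF d S(1)] S(2) by (simp add: dist_real_def)
    moreover have "infsum (\<lambda>x. \<bar>h x\<bar>) (-S) \<le> infsum d (-S)" if "\<And>x. \<bar>h x\<bar> \<le> d x" for h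
      by (rule infsum_mono[OF dominated_summable summable_on_subset[OF d]]) (use that in auto)
    ultimately have tail: "infsum (\<lambda>x. \<bar>h x\<bar>) (-S) \<le> \<epsilon>" if "\<And>x. \<bar>h x\<bar> \<le> d x" for h
      using that by fastforce
    show "\<exists>S. finite S \<and> (\<forall>\<^sub>F s in F. infsum (\<lambda>x. \<bar>f s x\<bar>) (-S) \<le> \<epsilon>)
               \<and> infsum (\<lambda>x. \<bar>g x\<bar>) (-S) \<le> \<epsilon>"
    proof (intro exI conjI)
      show "\<forall>\<^sub>F s in F. infsum (\<lambda>x. \<bar>f s x\<bar>) (-S) \<le> \<epsilon>"
        using dom by eventually_elim (rule tail, auto)
    qed (use S(1) tail[OF gd] in auto)
  qed
qed

lemma has_real_derivative_infsum_dominated: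
  fixes f :: "real \<Rightarrow> 'b \<Rightarrow> real"
  assumes summable: "\<And>s. f s summable_on UNIV"
    and deriv: "\<And>x. ((\<lambda>s. f s x) has_real_derivative f' x) (at 0)"
    and dom: "\<forall>\<^sub>F s in at 0. \<forall>x. \<bar>(f s x - f 0 x) / s\<bar> \<le> d x"
    and d: "d summable_on UNIV"
  shows "((\<lambda>s. infsum (f s) UNIV) has_real_derivative infsum f' UNIV) (at 0)"
proof -
  have quotient: "(infsum (f s) UNIV - infsum (f 0) UNIV) / s
      = infsum (\<lambda>x. (f s x - f 0 x) / s) UNIV" for s
  proof -
    have "infsum (\<lambda>x. (f s x - f 0 x) / s) UNIV = inverse s * infsum (\<lambda>x. f s x + - f 0 x) UNIV"
      by (simp add: divide_inverse mult.commute[of _ "inverse s"] infsum_cmult_right')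
    also have "infsum (\<lambda>x. f s x + - f 0 x) UNIV = infsum (f s) UNIV - infsum (f 0) UNIV"
      using infsum_add[OF summable summable_on_uminus[THEN iffD2, OF summable]]
      by (simp add: infsum_uminus)
    finally show ?thesis by (simp add: divide_inverse mult.commute)
  qed
  have "((\<lambda>s. infsum (\<lambda>x. (f s x - f 0 x) / s) UNIV) \<longlongrightarrow> infsum f' UNIV) (at 0)"
    by (rule tendsto_infsum_dominated[OF _ dom d]) (use deriv in \<open>simp_all add: DERIV_def\<close>)
  then show ?thesis by (simp add: DERIV_def quotient)
qed

lemma bounded_seq_pointwise_convergent_subseq:
  fixes f :: "nat \<Rightarrow> 'v \<Rightarrow> real"
  assumes "countable (UNIV :: 'v set)" and bounded: "\<And>n x. \<bar>f n x\<bar> \<le> K"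
  shows "\<exists>r l. strict_mono r \<and> (\<forall>x. (\<lambda>n. f (r n) x) \<longlonglongrightarrow> l x)"
proof -
  define g :: "nat \<Rightarrow> 'v" where "g = from_nat_into UNIV"
  have surj_g: "range g = UNIV" unfolding g_def by (rule range_from_nat_into) (auto simp: assms(1))
  define F :: "nat \<Rightarrow> nat \<Rightarrow> real" where "F n = (\<lambda>i. f n (g i))" for n
  define S :: "(nat \<Rightarrow> real) set" where "S = PiE UNIV (\<lambda>_. cball 0 K)"
  have "compactin (product_topology (\<lambda>_. euclidean) UNIV) S"
    unfolding S_def compactin_PiE by (simp add: compactin_euclidean_iff)
  then have "seq_compact S"
    by (simp add: euclidean_product_topology compactin_euclidean_iff compact_imp_seq_compact)
  moreover have "F n \<in> S" for n
    unfolding S_def F_def using bounded by (auto simp: PiE_iff dist_real_def)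
  ultimately obtain l r where lr: "strict_mono r" "(F \<circ> r) \<longlonglongrightarrow> l"
    by (metis seq_compactE)
  have coord: "(\<lambda>n. F (r n) i) \<longlonglongrightarrow> l i" for i
    using continuous_on_tendsto_compose[OF continuous_on_product_coordinates lr(2), of i] by simp
  have "(\<lambda>n. f (r n) x) \<longlonglongrightarrow> l (SOME i. g i = x)" for x
  proof -
    have "g (SOME i. g i = x) = x" using surj_g by (metis (mono_tags) UNIV_I image_iff someI_ex)
    then show ?thesis using coord[of "SOME i. g i = x"] unfolding F_def by simp
  qed
  then show ?thesis
    using lr(1) by (intro exI[where x=r] exI[where x="\<lambda>x. l (SOME i. g i = x)"]) auto
qed

lemma log_combination_local_min_deriv:
  fixes f g :: "real \<Rightarrow> real"
  assumes df: "(f has_real_derivative f') (at 0)" and dg: "(g has_real_derivative g') (at 0)"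
    and pos: "f 0 > 0" "g 0 > 0"
    and min: "\<And>s. g s > 0 \<Longrightarrow> k * ln (f 0) - c * ln (g 0) \<le> k * ln (f s) - c * ln (g s)"
  shows "k * f' / f 0 = c * g' / g 0"
proof -
  have "(g \<longlongrightarrow> g 0) (at 0)" using DERIV_isCont[OF dg] by (simp add: isCont_def)
  then have "\<forall>\<^sub>F s in at 0. g s > 0" using pos(2) by (intro order_tendstoD(1)) auto
  then obtain d where "d > 0" and gpos: "\<And>s. s \<noteq> 0 \<Longrightarrow> dist s 0 < d \<Longrightarrow> g s > 0"
    unfolding eventually_at by auto
  define \<psi> where "\<psi> s = k * ln (f s) - c * ln (g s)" for s
  have "(\<psi> has_real_derivative k * (inverse (f 0) * f') - c * (inverse (g 0) * g')) (at 0)"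
    unfolding \<psi>_def
    by (intro DERIV_diff DERIV_cmult DERIV_chain'[OF df DERIV_ln] DERIV_chain'[OF dg DERIV_ln] pos)
  then have "k * (inverse (f 0) * f') - c * (inverse (g 0) * g') = 0"
  proof (rule DERIV_local_min[OF _ \<open>d > 0\<close>], intro allI impI)
    show "\<psi> 0 \<le> \<psi> y" if "\<bar>0 - y\<bar> < d" for y
      using that gpos[of y] min[of y] unfolding \<psi>_def by (cases "y = 0") (auto simp: dist_real_def)
  qed
  then show ?thesis by (simp add: divide_inverse mult_ac)
qed

lemma adj_sym: "weighted_graph w \<Longrightarrow> adj w x y \<longleftrightarrow> adj w y x"
  unfolding adj_def weighted_graph_def by metis

lemma finite_walks_to:
  assumes "weighted_graph w" "locally_finite w"
  shows "finite {x. (adj w ^^ n) x y}"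
proof (induction n arbitrary: y)
  case 0
  then show ?case by simp
next
  case (Suc n)
  have "{x. (adj w ^^ Suc n) x y} \<subseteq> (\<Union>z\<in>nbrs w y. {x. (adj w ^^ n) x z})"
    unfolding nbrs_def using adj_sym[OF assms(1)] by auto
  moreover have "finite (\<Union>z\<in>nbrs w y. {x. (adj w ^^ n) x z})"
    using assms(2) Suc.IH unfolding locally_finite_def by auto
  ultimately show ?case by (rule finite_subset)
qed

lemma walk_graph_dist:
  assumes "connected_graph w"
  shows "(adj w ^^ graph_dist w x y) x y"
proof -
  have "\<exists>n. (adj w ^^ n) x y" using assms unfolding connected_graph_def rtranclp_power by blast
  then show ?thesis unfolding graph_dist_def by (rule LeastI_ex)
qed

lemma countable_vertices:
  fixes w :: "'v \<Rightarrow> 'v \<Rightarrow> real"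
  assumes "weighted_graph w" "locally_finite w" "connected_graph w"
  shows "countable (UNIV :: 'v set)"
proof -
  fix x0 :: 'v
  have "UNIV \<subseteq> (\<Union>n. {x. (adj w ^^ n) x x0})" using walk_graph_dist[OF assms(3)] by blast
  moreover have "countable (\<Union>n. {x. (adj w ^^ n) x x0})"
    using finite_walks_to[OF assms(1,2)] by (simp add: countable_finite)
  ultimately show ?thesis by (rule countable_subset)
qed

lemma finite_sublevel_cond_A2:
  assumes "weighted_graph w" "locally_finite w" "connected_graph w" "cond_A2 w a b"
  shows "finite {x. a x < M \<or> b x < M}"
proof -
  obtain x0 R where R: "\<And>x. graph_dist w x x0 \<ge> R \<Longrightarrow> a x \<ge> M \<and> b x \<ge> M"
    using assms(4) unfolding cond_A2_def by blast
  have "{x. a x < M \<or> b x < M} \<subseteq> (\<Union>n<R. {x. (adj w ^^ n) x x0})"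
    using R walk_graph_dist[OF assms(3)] by (force simp: not_le)
  moreover have "finite (\<Union>n<R. {x. (adj w ^^ n) x x0})"
    using finite_walks_to[OF assms(1,2)] by auto
  ultimately show ?thesis by (rule finite_subset)
qed

lemma Gamma_commute: "Gamma w \<mu> u v x = Gamma w \<mu> v u x"
  unfolding Gamma_def by (simp add: mult_ac)

lemma Gamma_add_scaled_left:
  "Gamma w \<mu> (\<lambda>y. \<xi> y + s * \<eta> y) u x = Gamma w \<mu> \<xi> u x + s * Gamma w \<mu> \<eta> u x"
proof -
  have "w x y * (\<xi> y + s * \<eta> y - (\<xi> x + s * \<eta> x)) * (u y - u x)
      = w x y * (\<xi> y - \<xi> x) * (u y - u x) + s * (w x y * (\<eta> y - \<eta> x) * (u y - u x))" for y
    by (simp add: algebra_simps)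
  then have "(\<Sum>y\<in>nbrs w x. w x y * (\<xi> y + s * \<eta> y - (\<xi> x + s * \<eta> x)) * (u y - u x))
      = (\<Sum>y\<in>nbrs w x. w x y * (\<xi> y - \<xi> x) * (u y - u x))
        + s * (\<Sum>y\<in>nbrs w x. w x y * (\<eta> y - \<eta> x) * (u y - u x))"
    by (simp add: sum.distrib sum_distrib_left)
  then show ?thesis unfolding Gamma_def by (simp add: algebra_simps)
qed

lemma Gamma_scale: "Gamma w \<mu> (\<lambda>y. c * u y) (\<lambda>y. d * v y) x = c * d * Gamma w \<mu> u v x"
  unfolding Gamma_def by (simp add: sum_distrib_left algebra_simps)

lemma Gamma_self_nonneg:
  assumes "weighted_graph w" "\<mu> x > 0"
  shows "Gamma w \<mu> u u x \<ge> 0"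
proof -
  have "0 \<le> w x y * (u y - u x) * (u y - u x)" for y
    using assms(1) unfolding weighted_graph_def by (simp add: mult.assoc)
  then show ?thesis unfolding Gamma_def using assms(2) by (simp add: sum_nonneg)
qed

type_synonym 'v fn_pair = "('v \<Rightarrow> real) \<times> ('v \<Rightarrow> real)"

locale ground_state_setting =
  fixes w :: "'v \<Rightarrow> 'v \<Rightarrow> real" and \<mu> a b :: "'v \<Rightarrow> real" and lam \<alpha> \<beta> \<mu>_min :: real
  assumes weighted: "weighted_graph w" and loc_fin: "locally_finite w" and conn: "connected_graph w"
    and mu_min_pos: "\<mu>_min > 0" and mu_ge_mu_min: "\<And>x. \<mu>_min \<le> \<mu> x"
    and alpha_gt_1: "\<alpha> > 1" and beta_gt_1: "\<beta> > 1"
    and a_nonneg: "\<And>x. a x \<ge> 0" and b_nonneg: "\<And>x. b x \<ge> 0"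
    and A2: "cond_A2 w a b" and lam_pos: "lam > 0"
begin

definition inner_density :: "'v fn_pair \<Rightarrow> 'v fn_pair \<Rightarrow> 'v \<Rightarrow> real" where
  "inner_density p q x = Gamma w \<mu> (fst p) (fst q) x + (lam * a x + 1) * fst p x * fst q x
     + Gamma w \<mu> (snd p) (snd q) x + (lam * b x + 1) * snd p x * snd q x"

definition finite_energy :: "'v fn_pair \<Rightarrow> bool" where
  "finite_energy p \<longleftrightarrow> (\<lambda>x. \<mu> x * inner_density p p x) summable_on UNIV"

definition coupling :: "'v fn_pair \<Rightarrow> 'v \<Rightarrow> real" where
  "coupling p x = \<bar>fst p x\<bar> powr \<alpha> * \<bar>snd p x\<bar> powr \<beta>"

definition coupling_integral :: "'v fn_pair \<Rightarrow> real" where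
  "coupling_integral p = infsum (\<lambda>x. \<mu> x * coupling p x) UNIV"

definition add_scaled :: "'v fn_pair \<Rightarrow> real \<Rightarrow> 'v fn_pair \<Rightarrow> 'v fn_pair" where
  "add_scaled p s q = ((\<lambda>y. fst p y + s * fst q y), (\<lambda>y. snd p y + s * snd q y))"

definition scale_pair :: "real \<Rightarrow> 'v fn_pair \<Rightarrow> 'v fn_pair" where
  "scale_pair t p = ((\<lambda>y. t * fst p y), (\<lambda>y. t * snd p y))"

abbreviation norm_sq :: "'v fn_pair \<Rightarrow> real" where
  "norm_sq \<equiv> H_norm_sq w \<mu> a b lam"

abbreviation zero_pair :: "'v fn_pair" where
  "zero_pair \<equiv> ((\<lambda>_. 0), (\<lambda>_. 0))"

abbreviation J :: "'v fn_pair \<Rightarrow> real" where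
  "J \<equiv> J_lambda w \<mu> a b lam \<alpha> \<beta>"

abbreviation Nehari :: "'v fn_pair set" where
  "Nehari \<equiv> nehari w \<mu> a b lam \<alpha> \<beta>"

definition \<kappa> :: real where
  "\<kappa> = 1/2 - 1/(\<alpha> + \<beta>)"

lemma \<kappa>_pos: "\<kappa> > 0"
  unfolding \<kappa>_def using alpha_gt_1 beta_gt_1 by (simp add: field_simps)

lemma mu_pos: "\<mu> x > 0"
  using mu_min_pos mu_ge_mu_min[of x] by linarith

lemma H_inner_eq_infsum: "H_inner w \<mu> a b lam p q = infsum (\<lambda>x. \<mu> x * inner_density p q x) UNIV"
  by (cases p; cases q) (simp add: H_inner_def mu_integral_def inner_density_def)

lemma norm_sq_eq_infsum: "norm_sq p = infsum (\<lambda>x. \<mu> x * inner_density p p x) UNIV"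
  unfolding H_norm_sq_def by (rule H_inner_eq_infsum)

lemma inner_density_commute: "inner_density p q x = inner_density q p x"
  unfolding inner_density_def by (simp add: Gamma_commute mult_ac)

lemma inner_density_add_scaled_left:
  "inner_density (add_scaled p s q) r x = inner_density p r x + s * inner_density q r x"
  unfolding inner_density_def add_scaled_def by (simp add: Gamma_add_scaled_left algebra_simps)

lemma inner_density_add_scaled_self:
  "inner_density (add_scaled p s q) (add_scaled p s q) x
     = inner_density p p x + 2 * s * inner_density p q x + s\<^sup>2 * inner_density q q x"
  unfolding inner_density_add_scaled_left
  by (simp add: inner_density_commute[of _ "add_scaled p s q"] inner_density_add_scaled_left
      inner_density_commute[of q p] algebra_simps power2_eq_square)

lemma inner_density_scale_pair:
  "inner_density (scale_pair t p) (scale_pair t p) x = t\<^sup>2 * inner_density p p x"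
  unfolding inner_density_def scale_pair_def by (simp add: Gamma_scale algebra_simps power2_eq_square)

lemma inner_density_self:
  "inner_density p p x
     = (Gamma w \<mu> (fst p) (fst p) x + (fst p x)\<^sup>2) + (Gamma w \<mu> (snd p) (snd p) x + (snd p x)\<^sup>2)
     + (lam * a x * (fst p x)\<^sup>2 + lam * b x * (snd p x)\<^sup>2)"
  unfolding inner_density_def by (simp add: algebra_simps power2_eq_square)

lemma inner_density_ge_sq: "inner_density p p x \<ge> (fst p x)\<^sup>2 + (snd p x)\<^sup>2"
  and inner_density_ge_potential:
    "inner_density p p x \<ge> lam * a x * (fst p x)\<^sup>2 + lam * b x * (snd p x)\<^sup>2"
proof -
  have "Gamma w \<mu> (fst p) (fst p) x \<ge> 0" "Gamma w \<mu> (snd p) (snd p) x \<ge> 0"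
    by (intro Gamma_self_nonneg weighted mu_pos)+
  moreover have "lam * a x * (fst p x)\<^sup>2 \<ge> 0" "lam * b x * (snd p x)\<^sup>2 \<ge> 0"
    using lam_pos a_nonneg[of x] b_nonneg[of x] by simp_all
  ultimately show "inner_density p p x \<ge> (fst p x)\<^sup>2 + (snd p x)\<^sup>2"
    and "inner_density p p x \<ge> lam * a x * (fst p x)\<^sup>2 + lam * b x * (snd p x)\<^sup>2"
    unfolding inner_density_self by (simp_all add: add_nonneg_nonneg)
qed

lemma inner_density_nonneg: "inner_density p p x \<ge> 0"
  using inner_density_ge_sq[of p x] by (meson add_nonneg_nonneg order_trans zero_le_power2)

lemma mu_inner_density_nonneg: "\<mu> x * inner_density p p x \<ge> 0"
  using mu_pos[of x] inner_density_nonneg[of p x] by simp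

lemma inner_density_abs_le: "2 * \<bar>inner_density p q x\<bar> \<le> inner_density p p x + inner_density q q x"
  using inner_density_nonneg[of "add_scaled p 1 q" x] inner_density_nonneg[of "add_scaled p (-1) q" x]
  unfolding inner_density_add_scaled_self by (simp add: abs_le_iff)

lemma H_lambda_iff_finite_energy: "p \<in> H_lambda w \<mu> a b lam \<longleftrightarrow> finite_energy p"
proof -
  obtain u v where p: "p = (u, v)" by (cases p)
  define f1 where "f1 x = \<mu> x * (grad_sq w \<mu> u x + (u x)\<^sup>2)" for x
  define f2 where "f2 x = \<mu> x * (grad_sq w \<mu> v x + (v x)\<^sup>2)" for x
  define f3 where "f3 x = \<mu> x * (lam * a x * (u x)\<^sup>2 + lam * b x * (v x)\<^sup>2)" for x
  have sum: "\<mu> x * inner_density p p x = f1 x + f2 x + f3 x" for x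
    unfolding f1_def f2_def f3_def p inner_density_self grad_sq_def by (simp add: algebra_simps)
  have nonneg: "f1 x \<ge> 0" "f2 x \<ge> 0" "f3 x \<ge> 0" for x
    unfolding f1_def f2_def f3_def grad_sq_def
    using Gamma_self_nonneg[of w \<mu> x, OF weighted mu_pos] mu_pos[of x] lam_pos
      a_nonneg[of x] b_nonneg[of x]
    by simp_all
  have split: "f1 summable_on UNIV" "f2 summable_on UNIV" "f3 summable_on UNIV"
    if s: "(\<lambda>x. f1 x + f2 x + f3 x) summable_on UNIV"
    by (rule summable_on_comparison_test[OF s]; use nonneg in \<open>auto simp: add_nonneg_nonneg\<close>)+
  have "p \<in> H_lambda w \<mu> a b lam
      \<longleftrightarrow> f1 summable_on UNIV \<and> f2 summable_on UNIV \<and> f3 summable_on UNIV"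
    unfolding p H_lambda_def W12_def mu_integrable_def f1_def f2_def f3_def by simp
  then show ?thesis
    unfolding finite_energy_def sum using split by (auto intro: summable_on_add)
qed

lemma inner_density_summable:
  assumes "finite_energy p" "finite_energy q"
  shows "(\<lambda>x. \<mu> x * inner_density p q x) summable_on UNIV"
proof -
  let ?g = "\<lambda>x. \<mu> x * inner_density p p x + \<mu> x * inner_density q q x"
  have "?g summable_on UNIV" using assms unfolding finite_energy_def by (rule summable_on_add)
  then have "(\<lambda>x. norm (?g x)) summable_on UNIV"
    by (rule summable_on_iff_abs_summable_on_real[THEN iffD1])
  moreover have "norm (\<mu> x * inner_density p q x) \<le> norm (?g x)" for x
    using inner_density_abs_le[of p q x] mu_pos[of x] mu_inner_density_nonneg[of x]
    by (simp add: abs_mult distrib_left[symmetric])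
  ultimately have "(\<lambda>x. norm (\<mu> x * inner_density p q x)) summable_on UNIV"
    by (rule Infinite_Sum.abs_summable_on_comparison_test)
  then show ?thesis by (rule summable_on_iff_abs_summable_on_real[THEN iffD2])
qed

lemma energy_add_scaled:
  assumes hp: "finite_energy p" and hq: "finite_energy q"
  shows "finite_energy (add_scaled p s q)"
    and "norm_sq (add_scaled p s q) = norm_sq p + 2 * s * H_inner w \<mu> a b lam p q + s\<^sup>2 * norm_sq q"
proof -
  let ?d = "\<lambda>p q x. \<mu> x * inner_density p q x"
  have e: "?d (add_scaled p s q) (add_scaled p s q) x
      = ?d p p x + (2 * s) * ?d p q x + s\<^sup>2 * ?d q q x" for x
    unfolding inner_density_add_scaled_self by (simp add: algebra_simps)
  have s1: "?d p p summable_on UNIV" and s3: "(\<lambda>x. s\<^sup>2 * ?d q q x) summable_on UNIV"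
    using hp hq unfolding finite_energy_def by (auto intro: summable_on_cmult_right)
  have s2: "(\<lambda>x. (2 * s) * ?d p q x) summable_on UNIV"
    by (rule summable_on_cmult_right[OF inner_density_summable[OF hp hq]])
  show "finite_energy (add_scaled p s q)"
    unfolding finite_energy_def e by (intro summable_on_add s1 s2 s3)
  have "norm_sq (add_scaled p s q) = infsum (?d p p) UNIV + infsum (\<lambda>x. (2 * s) * ?d p q x) UNIV
      + infsum (\<lambda>x. s\<^sup>2 * ?d q q x) UNIV"
    unfolding norm_sq_eq_infsum e by (simp add: infsum_add summable_on_add s1 s2 s3)
  then show "norm_sq (add_scaled p s q) = norm_sq p + 2 * s * H_inner w \<mu> a b lam p q + s\<^sup>2 * norm_sq q"
    unfolding norm_sq_eq_infsum H_inner_eq_infsum by (simp add: infsum_cmult_right')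
qed

lemma energy_scale_pair:
  assumes "finite_energy p"
  shows "finite_energy (scale_pair t p)" and "norm_sq (scale_pair t p) = t\<^sup>2 * norm_sq p"
proof -
  have e: "\<mu> x * inner_density (scale_pair t p) (scale_pair t p) x
      = t\<^sup>2 * (\<mu> x * inner_density p p x)" for x
    unfolding inner_density_scale_pair by simp
  show "finite_energy (scale_pair t p)"
    using assms unfolding finite_energy_def e by (rule summable_on_cmult_right)
  show "norm_sq (scale_pair t p) = t\<^sup>2 * norm_sq p"
    unfolding norm_sq_eq_infsum e by (rule infsum_cmult_right')
qed

lemma sq_le_norm_sq:
  assumes "finite_energy p"
  shows "\<mu>_min * ((fst p x)\<^sup>2 + (snd p x)\<^sup>2) \<le> norm_sq p"
proof -
  have "\<mu>_min * ((fst p x)\<^sup>2 + (snd p x)\<^sup>2) \<le> \<mu> x * inner_density p p x"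
    by (rule mult_mono[OF mu_ge_mu_min inner_density_ge_sq]) (use mu_pos[of x] in auto)
  also have "\<dots> = sum (\<lambda>x. \<mu> x * inner_density p p x) {x}" by simp
  also have "\<dots> \<le> norm_sq p"
    unfolding norm_sq_eq_infsum using assms
    by (intro finite_sum_le_infsum) (auto simp: finite_energy_def mu_inner_density_nonneg)
  finally show ?thesis .
qed

lemma abs_le_sqrt_norm_sq:
  assumes "finite_energy p"
  shows "\<bar>fst p x\<bar> \<le> sqrt (norm_sq p / \<mu>_min)" and "\<bar>snd p x\<bar> \<le> sqrt (norm_sq p / \<mu>_min)"
proof -
  have "(fst p x)\<^sup>2 + (snd p x)\<^sup>2 \<le> norm_sq p / \<mu>_min"
    using sq_le_norm_sq[OF assms, of x] mu_min_pos by (simp add: field_simps)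
  then have "(fst p x)\<^sup>2 \<le> norm_sq p / \<mu>_min" "(snd p x)\<^sup>2 \<le> norm_sq p / \<mu>_min"
    using zero_le_power2[of "fst p x"] zero_le_power2[of "snd p x"] by linarith+
  then show "\<bar>fst p x\<bar> \<le> sqrt (norm_sq p / \<mu>_min)" and "\<bar>snd p x\<bar> \<le> sqrt (norm_sq p / \<mu>_min)"
    by (metis real_sqrt_abs real_sqrt_le_mono)+
qed

lemma norm_sq_pos:
  assumes "finite_energy p" "p \<noteq> zero_pair"
  shows "norm_sq p > 0"
proof -
  obtain x where "fst p x \<noteq> 0 \<or> snd p x \<noteq> 0"
    using assms(2) by (metis prod.collapse ext)
  then have "\<mu>_min * ((fst p x)\<^sup>2 + (snd p x)\<^sup>2) > 0"
    using mu_min_pos by (intro mult_pos_pos) (auto simp: sum_power2_gt_zero_iff)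
  then show ?thesis using sq_le_norm_sq[OF assms(1), of x] by linarith
qed

lemma mu_coupling_nonneg: "0 \<le> \<mu> x * coupling p x"
  using mu_pos[of x] unfolding coupling_def by simp

lemma mu_coupling_le:
  assumes "finite_energy p"
  shows "\<mu> x * coupling p x \<le> sqrt (norm_sq p / \<mu>_min) powr (\<alpha> + \<beta> - 2) * (\<mu> x * inner_density p p x)"
proof -
  let ?L = "sqrt (norm_sq p / \<mu>_min)"
  have "coupling p x \<le> ?L powr (\<alpha> + \<beta> - 2) * ((fst p x)\<^sup>2 + (snd p x)\<^sup>2)"
    unfolding coupling_def
    by (rule abs_powr_mult_abs_powr_le_sq)
      (use abs_le_sqrt_norm_sq[OF assms] alpha_gt_1 beta_gt_1 in auto)
  also have "\<dots> \<le> ?L powr (\<alpha> + \<beta> - 2) * inner_density p p x"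
    by (rule mult_left_mono[OF inner_density_ge_sq]) simp
  finally have "\<mu> x * coupling p x \<le> \<mu> x * (?L powr (\<alpha> + \<beta> - 2) * inner_density p p x)"
    by (rule mult_left_mono) (use mu_pos[of x] in simp)
  then show ?thesis by (simp add: mult_ac)
qed

lemma coupling_summable:
  assumes "finite_energy p"
  shows "(\<lambda>x. \<mu> x * coupling p x) summable_on UNIV"
proof (rule summable_on_comparison_test)
  show "(\<lambda>x. sqrt (norm_sq p / \<mu>_min) powr (\<alpha> + \<beta> - 2) * (\<mu> x * inner_density p p x)) summable_on UNIV"
    using assms unfolding finite_energy_def by (rule summable_on_cmult_right)
qed (use mu_coupling_le[OF assms] mu_coupling_nonneg in auto)

lemma coupling_integral_le:
  assumes "finite_energy p"
  shows "coupling_integral p \<le> sqrt (norm_sq p / \<mu>_min) powr (\<alpha> + \<beta> - 2) * norm_sq p"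
proof -
  let ?c = "sqrt (norm_sq p / \<mu>_min) powr (\<alpha> + \<beta> - 2)"
  have "coupling_integral p \<le> infsum (\<lambda>x. ?c * (\<mu> x * inner_density p p x)) UNIV"
    unfolding coupling_integral_def
    by (rule infsum_mono[OF coupling_summable[OF assms]])
      (use assms mu_coupling_le in \<open>auto simp: finite_energy_def intro: summable_on_cmult_right\<close>)
  then show ?thesis unfolding norm_sq_eq_infsum by (simp add: infsum_cmult_right')
qed

lemma J_deriv_self_eq: "J_deriv w \<mu> a b lam \<alpha> \<beta> p p = norm_sq p - coupling_integral p"
proof -
  obtain u v where p: "p = (u, v)" by (cases p)
  have e: "\<alpha> / (\<alpha> + \<beta>) * \<bar>u x\<bar> powr (\<alpha> - 2) * u x * \<bar>v x\<bar> powr \<beta> * u x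
         + \<beta> / (\<alpha> + \<beta>) * \<bar>u x\<bar> powr \<alpha> * \<bar>v x\<bar> powr (\<beta> - 2) * v x * v x
       = coupling (u, v) x" for x
  proof -
    have "\<alpha> / (\<alpha> + \<beta>) * \<bar>u x\<bar> powr (\<alpha> - 2) * u x * \<bar>v x\<bar> powr \<beta> * u x
         + \<beta> / (\<alpha> + \<beta>) * \<bar>u x\<bar> powr \<alpha> * \<bar>v x\<bar> powr (\<beta> - 2) * v x * v x
        = \<alpha> / (\<alpha> + \<beta>) * (\<bar>u x\<bar> powr (\<alpha> - 2) * u x * u x) * \<bar>v x\<bar> powr \<beta>
         + \<beta> / (\<alpha> + \<beta>) * \<bar>u x\<bar> powr \<alpha> * (\<bar>v x\<bar> powr (\<beta> - 2) * v x * v x)"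
      by (simp add: mult_ac)
    also have "\<dots> = (\<alpha> / (\<alpha> + \<beta>) + \<beta> / (\<alpha> + \<beta>)) * (\<bar>u x\<bar> powr \<alpha> * \<bar>v x\<bar> powr \<beta>)"
      unfolding signed_powr_mult_self by (simp add: algebra_simps)
    also have "\<alpha> / (\<alpha> + \<beta>) + \<beta> / (\<alpha> + \<beta>) = 1"
      using alpha_gt_1 beta_gt_1 by (simp add: add_divide_distrib[symmetric])
    finally show ?thesis unfolding coupling_def by simp
  qed
  show ?thesis
    unfolding p J_deriv_def prod.case e mu_integral_def H_norm_sq_def coupling_integral_def ..
qed

lemma J_lambda_eq: "J p = norm_sq p / 2 - coupling_integral p / (\<alpha> + \<beta>)"
  by (cases p) (simp add: J_lambda_def H_norm_sq_def coupling_integral_def coupling_def mu_integral_def)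

lemma coupling_integral_scale_pair:
  "coupling_integral (scale_pair t p) = \<bar>t\<bar> powr (\<alpha> + \<beta>) * coupling_integral p"
proof -
  have "coupling (scale_pair t p) x = \<bar>t\<bar> powr (\<alpha> + \<beta>) * coupling p x" for x
    unfolding coupling_def scale_pair_def by (simp add: abs_mult powr_mult powr_add mult_ac)
  then have "coupling_integral (scale_pair t p)
      = infsum (\<lambda>x. \<bar>t\<bar> powr (\<alpha> + \<beta>) * (\<mu> x * coupling p x)) UNIV"
    unfolding coupling_integral_def by (simp add: mult_ac)
  also have "\<dots> = \<bar>t\<bar> powr (\<alpha> + \<beta>) * coupling_integral p"
    unfolding coupling_integral_def by (rule infsum_cmult_right')
  finally show ?thesis .
qed

lemma nehari_iff:
  "p \<in> Nehari \<longleftrightarrow> finite_energy p \<and> p \<noteq> zero_pair \<and> norm_sq p = coupling_integral p"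
  unfolding nehari_def using H_lambda_iff_finite_energy J_deriv_self_eq by auto

lemma nonzero_if_coupling_integral_pos:
  assumes "coupling_integral p > 0"
  shows "p \<noteq> zero_pair"
  using assms alpha_gt_1 beta_gt_1 unfolding coupling_integral_def coupling_def by auto

text \<open>Since \<open>\<alpha> + \<beta> > 2\<close>, the coupling is superquadratic near zero, which keeps
  the Nehari manifold away from the origin.\<close>

lemma nehari_norm_sq_ge:
  assumes "p \<in> Nehari"
  shows "norm_sq p \<ge> \<mu>_min"
proof (rule ccontr)
  assume "\<not> norm_sq p \<ge> \<mu>_min"
  have hs: "finite_energy p" and nz: "p \<noteq> zero_pair" and eq: "norm_sq p = coupling_integral p"
    using assms nehari_iff by auto
  have "norm_sq p > 0" by (rule norm_sq_pos[OF hs nz])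
  have "sqrt (norm_sq p / \<mu>_min) < 1" using \<open>\<not> norm_sq p \<ge> \<mu>_min\<close> mu_min_pos by simp
  then have "sqrt (norm_sq p / \<mu>_min) powr (\<alpha> + \<beta> - 2) < 1 powr (\<alpha> + \<beta> - 2)"
    by (intro powr_less_mono2) (use alpha_gt_1 beta_gt_1 \<open>norm_sq p > 0\<close> mu_min_pos in auto)
  then have "sqrt (norm_sq p / \<mu>_min) powr (\<alpha> + \<beta> - 2) * norm_sq p < norm_sq p"
    using \<open>norm_sq p > 0\<close> by simp
  then show False using coupling_integral_le[OF hs] eq by linarith
qed

lemma nehari_projection:
  assumes hs: "finite_energy p" and Bp: "coupling_integral p > 0"
  defines "t \<equiv> (norm_sq p / coupling_integral p) powr (1 / (\<alpha> + \<beta> - 2))"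
  shows "t > 0" and "scale_pair t p \<in> Nehari" and "J (scale_pair t p) = \<kappa> * (t\<^sup>2 * norm_sq p)"
proof -
  have Np: "norm_sq p > 0" by (rule norm_sq_pos[OF hs nonzero_if_coupling_integral_pos[OF Bp]])
  show tp: "t > 0" unfolding t_def using Np Bp by simp
  have "t powr (\<alpha> + \<beta> - 2) = norm_sq p / coupling_integral p"
    unfolding t_def powr_powr using alpha_gt_1 beta_gt_1 Np Bp by simp
  moreover have "\<bar>t\<bar> powr (\<alpha> + \<beta>) = t\<^sup>2 * t powr (\<alpha> + \<beta> - 2)"
    using tp powr_add[of t 2 "\<alpha> + \<beta> - 2"] by simp
  ultimately have Bsc: "coupling_integral (scale_pair t p) = t\<^sup>2 * norm_sq p"
    unfolding coupling_integral_scale_pair using Bp by simp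
  have Nsc: "norm_sq (scale_pair t p) = t\<^sup>2 * norm_sq p" by (rule energy_scale_pair(2)[OF hs])
  have "coupling_integral (scale_pair t p) > 0" unfolding Bsc using tp Np by simp
  then show "scale_pair t p \<in> Nehari"
    unfolding nehari_iff using energy_scale_pair(1)[OF hs] Bsc Nsc nonzero_if_coupling_integral_pos
    by auto
  show "J (scale_pair t p) = \<kappa> * (t\<^sup>2 * norm_sq p)"
    unfolding J_lambda_eq Bsc Nsc \<kappa>_def by (simp add: algebra_simps)
qed

lemma J_lambda_nehari:
  assumes "p \<in> Nehari"
  shows "J p = \<kappa> * norm_sq p"
  using assms unfolding nehari_iff J_lambda_eq \<kappa>_def by (simp add: algebra_simps)

text \<open>A unit mass at a single vertex has finite energy by local finiteness.\<close>

lemma nehari_nonempty: "Nehari \<noteq> {}"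
proof -
  fix x1 :: 'v
  define e where "e y = (if y = x1 then 1 else (0::real))" for y
  define p where "p = (e, e)"
  have zero: "\<mu> x * inner_density p p x = 0" if x: "x \<notin> insert x1 (nbrs w x1)" for x
  proof -
    have "e y = 0" if "y \<in> insert x (nbrs w x)" for y
      using x that adj_sym[OF weighted, of x1] unfolding e_def nbrs_def by auto
    then show ?thesis unfolding inner_density_def p_def Gamma_def by simp
  qed
  have hs: "finite_energy p" unfolding finite_energy_def
  proof (rule finite_nonzero_values_imp_summable_on)
    have "finite (insert x1 (nbrs w x1))" using loc_fin unfolding locally_finite_def by simp
    then show "finite {x \<in> UNIV. \<mu> x * inner_density p p x \<noteq> 0}"
      by (rule finite_subset[rotated]) (use zero in blast)
  qed
  have "sum (\<lambda>x. \<mu> x * coupling p x) {x1} \<le> coupling_integral p"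
    unfolding coupling_integral_def
    by (rule finite_sum_le_infsum[OF coupling_summable[OF hs]]) (auto simp: mu_coupling_nonneg)
  moreover have "coupling p x1 = 1" unfolding coupling_def p_def e_def by simp
  ultimately have "coupling_integral p > 0" using mu_pos[of x1] by simp
  then show ?thesis using nehari_projection(2)[OF hs] by blast
qed

lemma sq_le_inner_density_off_sublevel:
  assumes "a x \<ge> M" "b x \<ge> M" "M > 0"
  shows "(fst p x)\<^sup>2 + (snd p x)\<^sup>2 \<le> inner_density p p x / (lam * M)"
proof -
  have "lam * M * ((fst p x)\<^sup>2 + (snd p x)\<^sup>2) \<le> lam * a x * (fst p x)\<^sup>2 + lam * b x * (snd p x)\<^sup>2"
    using assms lam_pos by (simp add: distrib_left mult_right_mono add_mono)
  also have "\<dots> \<le> inner_density p p x" by (rule inner_density_ge_potential)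
  finally show ?thesis using assms(3) lam_pos by (simp add: pos_le_divide_eq mult.commute)
qed

lemma coupling_tail_le:
  assumes hp: "finite_energy p" and bounded: "\<And>x. \<bar>fst p x\<bar> \<le> L \<and> \<bar>snd p x\<bar> \<le> L" and "M > 0"
  shows "infsum (\<lambda>x. \<bar>\<mu> x * coupling p x\<bar>) (- {x. a x < M \<or> b x < M})
           \<le> L powr (\<alpha> + \<beta> - 2) / (lam * M) * norm_sq p"
proof -
  let ?S = "{x. a x < M \<or> b x < M}" and ?c = "L powr (\<alpha> + \<beta> - 2) / (lam * M)"
  let ?d = "\<lambda>x. \<mu> x * inner_density p p x"
  have pointwise: "\<bar>\<mu> x * coupling p x\<bar> \<le> ?c * ?d x" if "x \<in> -?S" for x
  proof -
    have "coupling p x \<le> L powr (\<alpha> + \<beta> - 2) * ((fst p x)\<^sup>2 + (snd p x)\<^sup>2)"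
      unfolding coupling_def
      by (rule abs_powr_mult_abs_powr_le_sq) (use bounded alpha_gt_1 beta_gt_1 in auto)
    also have "\<dots> \<le> L powr (\<alpha> + \<beta> - 2) * (inner_density p p x / (lam * M))"
      using sq_le_inner_density_off_sublevel[of M x p] that \<open>M > 0\<close> by (intro mult_left_mono) auto
    finally have "\<mu> x * coupling p x \<le> \<mu> x * (L powr (\<alpha> + \<beta> - 2) * (inner_density p p x / (lam * M)))"
      by (rule mult_left_mono) (use mu_pos[of x] in simp)
    then show ?thesis using mu_coupling_nonneg[of x p] by (simp add: field_simps)
  qed
  have "(\<lambda>x. \<bar>\<mu> x * coupling p x\<bar>) summable_on -?S"
    using summable_on_subset[OF coupling_summable[OF hp], of "-?S"]
    by (simp add: abs_of_nonneg mu_coupling_nonneg)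
  moreover have d: "?d summable_on UNIV" "?d summable_on -?S"
    using hp summable_on_subset unfolding finite_energy_def by blast+
  ultimately have "infsum (\<lambda>x. \<bar>\<mu> x * coupling p x\<bar>) (-?S) \<le> infsum (\<lambda>x. ?c * ?d x) (-?S)"
    by (intro infsum_mono pointwise summable_on_cmult_right)
  also have "\<dots> = ?c * infsum ?d (-?S)" by (rule infsum_cmult_right')
  also have "infsum ?d (-?S) \<le> norm_sq p"
    unfolding norm_sq_eq_infsum
    by (rule infsum_mono_neutral[OF d(2,1)]) (auto simp: mu_inner_density_nonneg)
  then have "?c * infsum ?d (-?S) \<le> ?c * norm_sq p"
    by (rule mult_left_mono) (use lam_pos \<open>M > 0\<close> in simp)
  finally show ?thesis .
qed

lemma nehari_J_ge: "p \<in> Nehari \<Longrightarrow> \<kappa> * \<mu>_min \<le> J p"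
  using J_lambda_nehari nehari_norm_sq_ge \<kappa>_pos by simp

lemma bdd_below_J_nehari: "bdd_below (J ` Nehari)"
  using nehari_J_ge by (intro bdd_belowI2) auto

lemma c_nehari_le: "p \<in> Nehari \<Longrightarrow> c_nehari w \<mu> a b lam \<alpha> \<beta> \<le> J p"
  unfolding c_nehari_def using bdd_below_J_nehari by (auto intro: cInf_lower)

lemma c_nehari_pos: "c_nehari w \<mu> a b lam \<alpha> \<beta> > 0"
proof -
  have "\<kappa> * \<mu>_min \<le> c_nehari w \<mu> a b lam \<alpha> \<beta>"
    unfolding c_nehari_def using nehari_nonempty nehari_J_ge by (auto intro: cInf_greatest)
  moreover have "\<kappa> * \<mu>_min > 0" using \<kappa>_pos mu_min_pos by simp
  ultimately show ?thesis by linarith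
qed

lemma minimizing_sequence:
  "\<exists>q. (\<forall>n. q n \<in> Nehari) \<and> (\<lambda>n. J (q n)) \<longlonglongrightarrow> c_nehari w \<mu> a b lam \<alpha> \<beta>"
proof -
  let ?c = "c_nehari w \<mu> a b lam \<alpha> \<beta>"
  have "\<exists>p\<in>Nehari. J p < ?c + 1 / (real n + 1)" for n :: nat
  proof -
    have "Inf (J ` Nehari) < ?c + 1 / (real n + 1)" unfolding c_nehari_def by simp
    then show ?thesis using cInf_less_iff[OF _ bdd_below_J_nehari] nehari_nonempty by auto
  qed
  then obtain q where q: "\<And>n. q n \<in> Nehari" "\<And>n. J (q n) < ?c + 1 / (real n + 1)"
    by metis
  have "(\<lambda>n. J (q n)) \<longlonglongrightarrow> ?c"
  proof (rule tendsto_sandwich)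
    show "\<forall>\<^sub>F n in sequentially. ?c \<le> J (q n)" using c_nehari_le q(1) by simp
    show "\<forall>\<^sub>F n in sequentially. J (q n) \<le> ?c + 1 / (real n + 1)" using q(2) by (simp add: less_imp_le)
    show "(\<lambda>n. ?c + 1 / (real n + 1)) \<longlonglongrightarrow> ?c"
      using tendsto_add[OF tendsto_const LIMSEQ_inverse_real_of_nat, of ?c]
      by (simp add: inverse_eq_divide add.commute)
  qed simp
  with q(1) show ?thesis by blast
qed

lemma pointwise_limit_energy:
  assumes hs: "\<And>n. finite_energy (q n)" and lim: "(\<lambda>n. norm_sq (q n)) \<longlonglongrightarrow> l"
    and u: "\<And>x. (\<lambda>n. fst (q n) x) \<longlonglongrightarrow> fst p x" and v: "\<And>x. (\<lambda>n. snd (q n) x) \<longlonglongrightarrow> snd p x"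
  shows "finite_energy p" and "norm_sq p \<le> l"
proof -
  have density: "(\<lambda>n. \<mu> x * inner_density (q n) (q n) x) \<longlonglongrightarrow> \<mu> x * inner_density p p x" for x
    unfolding inner_density_def Gamma_def by (intro tendsto_intros u v)
  have partial: "sum (\<lambda>x. \<mu> x * inner_density p p x) F \<le> l" if "finite F" for F
  proof (rule LIMSEQ_le[OF tendsto_sum[OF density] lim], intro exI allI impI)
    show "(\<Sum>x\<in>F. \<mu> x * inner_density (q n) (q n) x) \<le> norm_sq (q n)" for n
      unfolding norm_sq_eq_infsum using hs[of n] that
      by (intro finite_sum_le_infsum) (auto simp: finite_energy_def mu_inner_density_nonneg)
  qed
  show hp: "finite_energy p" unfolding finite_energy_def
    by (rule nonneg_bdd_above_summable_on)
      (use partial mu_inner_density_nonneg in \<open>auto intro!: bdd_aboveI2\<close>)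
  show "norm_sq p \<le> l"
    unfolding norm_sq_eq_infsum using hp partial
    by (intro infsum_le_finite_sums) (auto simp: finite_energy_def)
qed

text \<open>Compactness comes from \<open>(A\<^sub>2)\<close>: outside the finite set where \<open>a\<close> or \<open>b\<close> is below \<open>M\<close>,
  the coupling is controlled by \<open>norm_sq / M\<close>, uniformly along a bounded sequence.\<close>

lemma coupling_tail_uniformly_small:
  assumes "\<epsilon> > 0"
  shows "\<exists>M. \<forall>r. finite_energy r \<and> norm_sq r \<le> K
           \<longrightarrow> infsum (\<lambda>x. \<bar>\<mu> x * coupling r x\<bar>) (- {x. a x < M \<or> b x < M}) \<le> \<epsilon>"
proof (intro exI allI impI)
  define L where "L = sqrt (K / \<mu>_min)"
  define M where "M = max 1 (L powr (\<alpha> + \<beta> - 2) * K / (lam * \<epsilon>))"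
  have "M > 0" unfolding M_def by simp
  fix r
  assume r: "finite_energy r \<and> norm_sq r \<le> K"
  have "sqrt (norm_sq r / \<mu>_min) \<le> L"
    unfolding L_def using r mu_min_pos by (intro real_sqrt_le_mono divide_right_mono) auto
  then have "\<bar>fst r x\<bar> \<le> L \<and> \<bar>snd r x\<bar> \<le> L" for x
    using abs_le_sqrt_norm_sq[of r x] r by linarith
  then have "infsum (\<lambda>x. \<bar>\<mu> x * coupling r x\<bar>) (- {x. a x < M \<or> b x < M})
      \<le> L powr (\<alpha> + \<beta> - 2) / (lam * M) * norm_sq r"
    using r by (intro coupling_tail_le \<open>M > 0\<close>) auto
  also have "\<dots> \<le> L powr (\<alpha> + \<beta> - 2) / (lam * M) * K"
    using r lam_pos \<open>M > 0\<close> by (intro mult_left_mono) auto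
  also have "\<dots> \<le> \<epsilon>"
  proof -
    have "L powr (\<alpha> + \<beta> - 2) * K / (lam * \<epsilon>) \<le> M" unfolding M_def by simp
    then have "L powr (\<alpha> + \<beta> - 2) * K \<le> M * (lam * \<epsilon>)"
      using lam_pos assms by (simp add: pos_divide_le_eq)
    then show ?thesis using lam_pos \<open>M > 0\<close> by (simp add: pos_divide_le_eq mult_ac)
  qed
  finally show "infsum (\<lambda>x. \<bar>\<mu> x * coupling r x\<bar>) (- {x. a x < M \<or> b x < M}) \<le> \<epsilon>" .
qed

lemma coupling_integral_tendsto:
  assumes hs: "\<And>n. finite_energy (q n)" "finite_energy p"
    and bounded: "\<And>n. norm_sq (q n) \<le> K" "norm_sq p \<le> K"
    and u: "\<And>x. (\<lambda>n. fst (q n) x) \<longlonglongrightarrow> fst p x" and v: "\<And>x. (\<lambda>n. snd (q n) x) \<longlonglongrightarrow> snd p x"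
  shows "(\<lambda>n. coupling_integral (q n)) \<longlonglongrightarrow> coupling_integral p"
  unfolding coupling_integral_def
proof (rule tendsto_infsum_uniform_tails)
  show "\<forall>\<^sub>F n in sequentially. (\<lambda>x. \<mu> x * coupling (q n) x) summable_on UNIV"
    using coupling_summable hs by simp
  show "(\<lambda>x. \<mu> x * coupling p x) summable_on UNIV" by (rule coupling_summable[OF hs(2)])
  show "(\<lambda>n. \<mu> x * coupling (q n) x) \<longlonglongrightarrow> \<mu> x * coupling p x" for x
    unfolding coupling_def
    by (intro tendsto_mult tendsto_const tendsto_powr2 tendsto_rabs u v)
      (use alpha_gt_1 beta_gt_1 in auto)
next
  fix \<epsilon> :: real
  assume "\<epsilon> > 0"
  then obtain M where tail: "\<And>r. finite_energy r \<Longrightarrow> norm_sq r \<le> K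
      \<Longrightarrow> infsum (\<lambda>x. \<bar>\<mu> x * coupling r x\<bar>) (- {x. a x < M \<or> b x < M}) \<le> \<epsilon>"
    using coupling_tail_uniformly_small[of \<epsilon> K] by blast
  show "\<exists>S. finite S \<and> (\<forall>\<^sub>F n in sequentially. infsum (\<lambda>x. \<bar>\<mu> x * coupling (q n) x\<bar>) (-S) \<le> \<epsilon>)
          \<and> infsum (\<lambda>x. \<bar>\<mu> x * coupling p x\<bar>) (-S) \<le> \<epsilon>"
  proof (intro exI conjI)
    show "finite {x. a x < M \<or> b x < M}" by (rule finite_sublevel_cond_A2[OF weighted loc_fin conn A2])
  qed (use tail hs bounded in auto)
qed

lemma nehari_below_norm_sq:
  assumes hp: "finite_energy p" and Bp: "coupling_integral p > 0"
    and less: "norm_sq p < coupling_integral p"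
  shows "\<exists>r\<in>Nehari. J r < \<kappa> * norm_sq p"
proof -
  define t where "t = (norm_sq p / coupling_integral p) powr (1 / (\<alpha> + \<beta> - 2))"
  have Np: "norm_sq p > 0" by (rule norm_sq_pos[OF hp nonzero_if_coupling_integral_pos[OF Bp]])
  have "t > 0" and r: "scale_pair t p \<in> Nehari" and Jt: "J (scale_pair t p) = \<kappa> * (t\<^sup>2 * norm_sq p)"
    using nehari_projection[OF hp Bp] unfolding t_def by auto
  have "t < 1 powr (1 / (\<alpha> + \<beta> - 2))" unfolding t_def
    by (rule powr_less_mono2) (use alpha_gt_1 beta_gt_1 less Np Bp in auto)
  then have "t\<^sup>2 < 1" using \<open>t > 0\<close> by (simp add: power_less_one_iff abs_less_iff)
  then have "J (scale_pair t p) < \<kappa> * norm_sq p" unfolding Jt using Np \<kappa>_pos by simp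
  with r show ?thesis by blast
qed

lemma energy_bounded_pointwise_convergent_subseq:
  fixes q :: "nat \<Rightarrow> 'v fn_pair"
  assumes "\<And>n. finite_energy (q n)" "\<And>n. norm_sq (q n) \<le> K"
  shows "\<exists>r p. strict_mono r \<and> (\<forall>x. (\<lambda>n. fst (q (r n)) x) \<longlonglongrightarrow> fst p x)
           \<and> (\<forall>x. (\<lambda>n. snd (q (r n)) x) \<longlonglongrightarrow> snd p x)"
proof -
  have countable: "countable (UNIV :: 'v set)" by (rule countable_vertices[OF weighted loc_fin conn])
  have "sqrt (norm_sq (q n) / \<mu>_min) \<le> sqrt (K / \<mu>_min)" for n
    using assms(2)[of n] mu_min_pos by (intro real_sqrt_le_mono divide_right_mono) auto
  then have bounded: "\<bar>fst (q n) x\<bar> \<le> sqrt (K / \<mu>_min)" "\<bar>snd (q n) x\<bar> \<le> sqrt (K / \<mu>_min)" for n x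
    using abs_le_sqrt_norm_sq[OF assms(1)] by (meson order_trans)+
  obtain r1 u where r1: "strict_mono r1" "\<And>x. (\<lambda>n. fst (q (r1 n)) x) \<longlonglongrightarrow> u x"
    using bounded_seq_pointwise_convergent_subseq[OF countable, of "\<lambda>n. fst (q n)"] bounded(1) by blast
  obtain r2 v where r2: "strict_mono r2" "\<And>x. (\<lambda>n. snd (q (r1 (r2 n))) x) \<longlonglongrightarrow> v x"
    using bounded_seq_pointwise_convergent_subseq[OF countable, of "\<lambda>n. snd (q (r1 n))"] bounded(2)
    by blast
  show ?thesis
  proof (intro exI[of _ "r1 \<circ> r2"] exI[of _ "(u, v)"] conjI allI)
    show "strict_mono (r1 \<circ> r2)" using r1(1) r2(1) by (rule strict_mono_o)
    show "(\<lambda>n. fst (q ((r1 \<circ> r2) n)) x) \<longlonglongrightarrow> fst (u, v) x" for x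
      using LIMSEQ_subseq_LIMSEQ[OF r1(2) r2(1)] by (simp add: o_def)
    show "(\<lambda>n. snd (q ((r1 \<circ> r2) n)) x) \<longlonglongrightarrow> snd (u, v) x" for x
      using r2(2) by simp
  qed
qed

text \<open>A limit of a minimizing sequence with no loss of coupling lies on the Nehari
  manifold: otherwise projecting it there would undercut the infimum.\<close>

lemma nehari_level_attained:
  fixes c
  defines "c \<equiv> c_nehari w \<mu> a b lam \<alpha> \<beta>"
  assumes hp: "finite_energy p" and Np: "norm_sq p \<le> c / \<kappa>" and Bp: "coupling_integral p = c / \<kappa>"
  shows "p \<in> Nehari" and "J p = c"
proof -
  have "coupling_integral p > 0" using Bp c_nehari_pos \<kappa>_pos unfolding c_def by simp
  have "norm_sq p = coupling_integral p"
  proof (rule ccontr)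
    assume "norm_sq p \<noteq> coupling_integral p"
    then have "norm_sq p < coupling_integral p" using Np Bp by simp
    then obtain r where "r \<in> Nehari" "J r < \<kappa> * norm_sq p"
      using nehari_below_norm_sq[OF hp \<open>coupling_integral p > 0\<close>] by blast
    moreover have "\<kappa> * norm_sq p \<le> c" using Np \<kappa>_pos by (simp add: field_simps)
    ultimately show False using c_nehari_le[of r] unfolding c_def by linarith
  qed
  moreover have "p \<noteq> zero_pair"
    by (rule nonzero_if_coupling_integral_pos[OF \<open>coupling_integral p > 0\<close>])
  ultimately show "p \<in> Nehari" using hp nehari_iff by simp
  then show "J p = c"
    using J_lambda_nehari Bp \<open>norm_sq p = coupling_integral p\<close> \<kappa>_pos by simp
qed

lemma nehari_minimizer_exists:
  obtains p where "p \<in> Nehari" "J p = c_nehari w \<mu> a b lam \<alpha> \<beta>"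
proof -
  let ?c = "c_nehari w \<mu> a b lam \<alpha> \<beta>"
  obtain q where q: "\<And>n. q n \<in> Nehari" "(\<lambda>n. J (q n)) \<longlonglongrightarrow> ?c"
    using minimizing_sequence by blast
  have hs: "finite_energy (q n)" and NB: "norm_sq (q n) = coupling_integral (q n)" for n
    using q(1) nehari_iff by auto
  have "(\<lambda>n. J (q n) / \<kappa>) \<longlonglongrightarrow> ?c / \<kappa>"
    by (rule tendsto_divide[OF q(2) tendsto_const]) (use \<kappa>_pos in simp)
  moreover have "J (q n) / \<kappa> = norm_sq (q n)" for n using J_lambda_nehari[OF q(1)] \<kappa>_pos by simp
  ultimately have Nq: "(\<lambda>n. norm_sq (q n)) \<longlonglongrightarrow> ?c / \<kappa>" by simp
  then have "bdd_above (range (\<lambda>n. norm_sq (q n)))"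
    by (intro Bseq_bdd_above convergent_imp_Bseq convergentI)
  then obtain K where K: "\<And>n. norm_sq (q n) \<le> K" unfolding bdd_above_def by blast
  obtain r p where r: "strict_mono r" and
    u: "\<And>x. (\<lambda>n. fst (q (r n)) x) \<longlonglongrightarrow> fst p x" and v: "\<And>x. (\<lambda>n. snd (q (r n)) x) \<longlonglongrightarrow> snd p x"
    using energy_bounded_pointwise_convergent_subseq[of q, OF hs K] by blast
  have Nqr: "(\<lambda>n. norm_sq (q (r n))) \<longlonglongrightarrow> ?c / \<kappa>" using LIMSEQ_subseq_LIMSEQ[OF Nq r] by (simp add: o_def)
  have hp: "finite_energy p" and Np: "norm_sq p \<le> ?c / \<kappa>"
    using pointwise_limit_energy[OF hs Nqr u v] by auto
  have "?c / \<kappa> \<le> K" using K by (intro LIMSEQ_le_const2[OF Nq]) auto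
  then have "(\<lambda>n. coupling_integral (q (r n))) \<longlonglongrightarrow> coupling_integral p"
    using coupling_integral_tendsto[OF hs hp K _ u v] Np by simp
  moreover have "(\<lambda>n. coupling_integral (q (r n))) \<longlonglongrightarrow> ?c / \<kappa>" using Nqr NB by simp
  ultimately have Bp: "coupling_integral p = ?c / \<kappa>" by (rule LIMSEQ_unique)
  show ?thesis using nehari_level_attained[OF hp Np Bp] by (rule that)
qed



definition coupling_deriv :: "'v fn_pair \<Rightarrow> 'v fn_pair \<Rightarrow> real" where
  "coupling_deriv p q =
     infsum (\<lambda>x. \<mu> x * coupling_line_deriv \<alpha> \<beta> (fst p x) (fst q x) (snd p x) (snd q x) 0) UNIV"

lemma coupling_add_scaled:
  "coupling (add_scaled p s q) x = coupling_line \<alpha> \<beta> (fst p x) (fst q x) (snd p x) (snd q x) s"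
  unfolding coupling_def add_scaled_def coupling_line_def by simp

lemma add_scaled_zero: "add_scaled p 0 q = p"
  unfolding add_scaled_def by simp

lemma abs_coupling_diff_quotient_le:
  assumes hp: "finite_energy p" and hq: "finite_energy q" and s: "\<bar>s\<bar> < 1" "s \<noteq> 0"
  defines "C \<equiv> (\<alpha> + \<beta>) * (2 * sqrt (norm_sq p / \<mu>_min) + 2 * sqrt (norm_sq q / \<mu>_min))
                    powr (\<alpha> + \<beta> - 2) * 4"
  shows "\<bar>(\<mu> x * coupling (add_scaled p s q) x - \<mu> x * coupling p x) / s\<bar>
           \<le> C * (\<mu> x * inner_density p p x + \<mu> x * inner_density q q x)"
proof -
  let ?m = "\<bar>fst p x\<bar> + \<bar>fst q x\<bar> + \<bar>snd p x\<bar> + \<bar>snd q x\<bar>"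
  let ?L = "2 * sqrt (norm_sq p / \<mu>_min) + 2 * sqrt (norm_sq q / \<mu>_min)"
  have "?m \<le> ?L" using abs_le_sqrt_norm_sq[OF hp, of x] abs_le_sqrt_norm_sq[OF hq, of x] by linarith
  have "?m\<^sup>2 \<le> 4 * ((fst p x)\<^sup>2 + (fst q x)\<^sup>2 + (snd p x)\<^sup>2 + (snd q x)\<^sup>2)"
    using sum_four_sq_le[of "\<bar>fst p x\<bar>" "\<bar>fst q x\<bar>" "\<bar>snd p x\<bar>" "\<bar>snd q x\<bar>"] by simp
  also have "\<dots> \<le> 4 * (inner_density p p x + inner_density q q x)"
    using inner_density_ge_sq[of p x] inner_density_ge_sq[of q x] by simp
  finally have msq: "?m\<^sup>2 \<le> 4 * (inner_density p p x + inner_density q q x)" .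
  have "\<bar>(coupling (add_scaled p s q) x - coupling p x) / s\<bar> \<le> (\<alpha> + \<beta>) * ?L powr (\<alpha> + \<beta> - 2) * ?m\<^sup>2"
    using abs_coupling_line_diff_quotient_le[OF alpha_gt_1 beta_gt_1 s \<open>?m \<le> ?L\<close>]
    by (simp add: coupling_add_scaled coupling_add_scaled[of p 0 q, unfolded add_scaled_zero])
  also have "\<dots> \<le> (\<alpha> + \<beta>) * ?L powr (\<alpha> + \<beta> - 2) * (4 * (inner_density p p x + inner_density q q x))"
    by (rule mult_left_mono[OF msq]) (use alpha_gt_1 beta_gt_1 in simp)
  also have "\<dots> = C * (inner_density p p x + inner_density q q x)" unfolding C_def by simp
  finally have "\<mu> x * \<bar>(coupling (add_scaled p s q) x - coupling p x) / s\<bar>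
      \<le> \<mu> x * (C * (inner_density p p x + inner_density q q x))"
    by (rule mult_left_mono) (use mu_pos[of x] in simp)
  moreover have "\<bar>(\<mu> x * coupling (add_scaled p s q) x - \<mu> x * coupling p x) / s\<bar>
      = \<mu> x * \<bar>(coupling (add_scaled p s q) x - coupling p x) / s\<bar>"
    using mu_pos[of x] by (simp add: right_diff_distrib[symmetric] abs_mult)
  moreover have "\<mu> x * (C * (inner_density p p x + inner_density q q x))
      = C * (\<mu> x * inner_density p p x + \<mu> x * inner_density q q x)"
    by (simp add: algebra_simps)
  ultimately show ?thesis by (simp only:)
qed

lemma has_real_derivative_coupling_integral:
  assumes hp: "finite_energy p" and hq: "finite_energy q"
  shows "((\<lambda>s. coupling_integral (add_scaled p s q)) has_real_derivative coupling_deriv p q) (at 0)"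
proof -
  define C where "C = (\<alpha> + \<beta>) * (2 * sqrt (norm_sq p / \<mu>_min) + 2 * sqrt (norm_sq q / \<mu>_min))
                          powr (\<alpha> + \<beta> - 2) * 4"
  have "((\<lambda>s. infsum (\<lambda>x. \<mu> x * coupling (add_scaled p s q) x) UNIV) has_real_derivative
      infsum (\<lambda>x. \<mu> x * coupling_line_deriv \<alpha> \<beta> (fst p x) (fst q x) (snd p x) (snd q x) 0) UNIV) (at 0)"
  proof (rule has_real_derivative_infsum_dominated)
    show "(\<lambda>x. \<mu> x * coupling (add_scaled p s q) x) summable_on UNIV" for s
      by (rule coupling_summable[OF energy_add_scaled(1)[OF hp hq]])
    show "((\<lambda>s. \<mu> x * coupling (add_scaled p s q) x) has_real_derivative
        \<mu> x * coupling_line_deriv \<alpha> \<beta> (fst p x) (fst q x) (snd p x) (snd q x) 0) (at 0)" for x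
      unfolding coupling_add_scaled
      by (intro DERIV_cmult has_real_derivative_coupling_line alpha_gt_1 beta_gt_1)
    show "(\<lambda>x. C * (\<mu> x * inner_density p p x + \<mu> x * inner_density q q x)) summable_on UNIV"
      using hp hq unfolding finite_energy_def by (intro summable_on_cmult_right summable_on_add)
    have "\<forall>\<^sub>F s in at (0::real). s \<noteq> 0 \<and> \<bar>s\<bar> < 1"
      unfolding eventually_at by (intro exI[of _ 1]) (auto simp: dist_real_def)
    then show "\<forall>\<^sub>F s in at 0. \<forall>x.
        \<bar>(\<mu> x * coupling (add_scaled p s q) x - \<mu> x * coupling (add_scaled p 0 q) x) / s\<bar>
        \<le> C * (\<mu> x * inner_density p p x + \<mu> x * inner_density q q x)"
      by eventually_elim
        (use abs_coupling_diff_quotient_le[OF hp hq] in \<open>simp add: C_def add_scaled_zero\<close>)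
  qed
  then show ?thesis unfolding coupling_integral_def coupling_deriv_def .
qed

lemma J_deriv_eq:
  "J_deriv w \<mu> a b lam \<alpha> \<beta> p q = H_inner w \<mu> a b lam p q - coupling_deriv p q / (\<alpha> + \<beta>)"
proof -
  obtain u v \<xi> \<eta> where pq: "p = (u, v)" "q = (\<xi>, \<eta>)" by (cases p, cases q)
  have e: "\<mu> x * (\<alpha> / (\<alpha> + \<beta>) * \<bar>u x\<bar> powr (\<alpha> - 2) * u x * \<bar>v x\<bar> powr \<beta> * \<xi> x
                + \<beta> / (\<alpha> + \<beta>) * \<bar>u x\<bar> powr \<alpha> * \<bar>v x\<bar> powr (\<beta> - 2) * v x * \<eta> x)
      = inverse (\<alpha> + \<beta>) * (\<mu> x * coupling_line_deriv \<alpha> \<beta> (u x) (\<xi> x) (v x) (\<eta> x) 0)" for x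
    unfolding coupling_line_deriv_def by (simp add: divide_inverse algebra_simps)
  have "J_deriv w \<mu> a b lam \<alpha> \<beta> (u, v) (\<xi>, \<eta>) = H_inner w \<mu> a b lam (u, v) (\<xi>, \<eta>)
      - infsum (\<lambda>x. inverse (\<alpha> + \<beta>) * (\<mu> x * coupling_line_deriv \<alpha> \<beta> (u x) (\<xi> x) (v x) (\<eta> x) 0)) UNIV"
    unfolding J_deriv_def prod.case mu_integral_def e ..
  then show ?thesis
    unfolding pq coupling_deriv_def infsum_cmult_right' by (simp add: divide_inverse mult_ac)
qed

text \<open>On the ray through \<open>r\<close>, \<open>J\<close> peaks at the Nehari point, where it equals
  \<open>\<kappa> (norm_sq r)\<^bsup>(\<alpha>+\<beta>)/(\<alpha>+\<beta>-2)\<^esup> / (coupling_integral r)\<^bsup>2/(\<alpha>+\<beta>-2)\<^esup>\<close>; taking logarithms,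
  minimality of \<open>p\<close> on the Nehari manifold becomes a minimality statement valid off it.\<close>

lemma nehari_minimizer_log_ineq:
  assumes pN: "p \<in> Nehari" and pmin: "\<And>r. r \<in> Nehari \<Longrightarrow> J p \<le> J r"
    and hr: "finite_energy r" and Br: "coupling_integral r > 0"
  shows "(\<alpha> + \<beta>) * ln (norm_sq p) - 2 * ln (norm_sq p)
           \<le> (\<alpha> + \<beta>) * ln (norm_sq r) - 2 * ln (coupling_integral r)"
proof -
  define t where "t = (norm_sq r / coupling_integral r) powr (1 / (\<alpha> + \<beta> - 2))"
  have Np: "norm_sq p > 0" using pN unfolding nehari_iff by (blast intro: norm_sq_pos)
  have Nr: "norm_sq r > 0" by (rule norm_sq_pos[OF hr nonzero_if_coupling_integral_pos[OF Br]])
  have "t > 0" and "scale_pair t r \<in> Nehari" and Jt: "J (scale_pair t r) = \<kappa> * (t\<^sup>2 * norm_sq r)"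
    using nehari_projection[OF hr Br] unfolding t_def by auto
  then have "\<kappa> * norm_sq p \<le> \<kappa> * (t\<^sup>2 * norm_sq r)"
    using pmin J_lambda_nehari[OF pN] by metis
  then have "ln (norm_sq p) \<le> ln (t\<^sup>2 * norm_sq r)"
    using \<kappa>_pos Np by simp
  also have "\<dots> = ln (t\<^sup>2) + ln (norm_sq r)"
    using Nr \<open>t > 0\<close> by (simp add: ln_mult)
  also have "ln (t\<^sup>2) = 2 / (\<alpha> + \<beta> - 2) * (ln (norm_sq r) - ln (coupling_integral r))"
    unfolding t_def using Nr Br \<open>t > 0\<close>
    by (simp add: ln_realpow[symmetric] powr_realpow[symmetric] powr_powr ln_powr ln_div)
  finally have "(\<alpha> + \<beta> - 2) * ln (norm_sq p)
      \<le> (\<alpha> + \<beta> - 2) * (2 / (\<alpha> + \<beta> - 2) * (ln (norm_sq r) - ln (coupling_integral r)) + ln (norm_sq r))"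
    using alpha_gt_1 beta_gt_1 by (intro mult_left_mono) auto
  also have "\<dots> = 2 * (ln (norm_sq r) - ln (coupling_integral r)) + (\<alpha> + \<beta> - 2) * ln (norm_sq r)"
    using alpha_gt_1 beta_gt_1 by (simp add: distrib_left)
  finally show ?thesis by (simp add: algebra_simps)
qed

lemma nehari_minimizer_critical:
  assumes pN: "p \<in> Nehari" and pmin: "\<And>r. r \<in> Nehari \<Longrightarrow> J p \<le> J r" and hq: "finite_energy q"
  shows "J_deriv w \<mu> a b lam \<alpha> \<beta> p q = 0"
proof -
  have hp: "finite_energy p" and NB: "norm_sq p = coupling_integral p" and "p \<noteq> zero_pair"
    using pN nehari_iff by auto
  then have "norm_sq p > 0" by (intro norm_sq_pos)
  let ?A = "H_inner w \<mu> a b lam p q"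
  define f where "f s = norm_sq (add_scaled p s q)" for s
  define g where "g s = coupling_integral (add_scaled p s q)" for s
  have f0: "f 0 = norm_sq p" and g0: "g 0 = norm_sq p"
    unfolding f_def g_def add_scaled_zero NB by simp_all
  have "f = (\<lambda>s. norm_sq p + 2 * s * ?A + s\<^sup>2 * norm_sq q)"
    unfolding f_def using energy_add_scaled(2)[OF hp hq] by blast
  then have df: "(f has_real_derivative 2 * ?A) (at 0)" by (auto intro!: derivative_eq_intros)
  have dg: "(g has_real_derivative coupling_deriv p q) (at 0)"
    unfolding g_def by (rule has_real_derivative_coupling_integral[OF hp hq])
  have "(\<alpha> + \<beta>) * (2 * ?A) / f 0 = 2 * coupling_deriv p q / g 0"
  proof (rule log_combination_local_min_deriv[OF df dg])
    show "(\<alpha> + \<beta>) * ln (f 0) - 2 * ln (g 0) \<le> (\<alpha> + \<beta>) * ln (f s) - 2 * ln (g s)"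
      if "g s > 0" for s
      using nehari_minimizer_log_ineq[OF pN pmin energy_add_scaled(1)[OF hp hq], of s] that
      unfolding f0 g0 unfolding f_def g_def by simp
  qed (use f0 g0 \<open>norm_sq p > 0\<close> in simp_all)
  then have "(\<alpha> + \<beta>) * ?A = coupling_deriv p q"
    using f0 g0 \<open>norm_sq p > 0\<close> by (simp add: field_simps)
  then show ?thesis unfolding J_deriv_eq using alpha_gt_1 beta_gt_1 by (simp add: field_simps)
qed

lemma ground_state_exists:
  "\<exists>p. weak_solution w \<mu> a b lam \<alpha> \<beta> p \<and> p \<in> Nehari \<and> J p = c_nehari w \<mu> a b lam \<alpha> \<beta>"
proof -
  obtain p where pN: "p \<in> Nehari" and Jp: "J p = c_nehari w \<mu> a b lam \<alpha> \<beta>"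
    by (rule nehari_minimizer_exists)
  have "weak_solution w \<mu> a b lam \<alpha> \<beta> p"
    unfolding weak_solution_def
  proof (intro conjI ballI)
    show "p \<in> H_lambda w \<mu> a b lam" using pN unfolding nehari_def by simp
    show "J_deriv w \<mu> a b lam \<alpha> \<beta> p q = 0" if "q \<in> H_lambda w \<mu> a b lam" for q
      using nehari_minimizer_critical[OF pN _ that[unfolded H_lambda_iff_finite_energy]] c_nehari_le Jp
      by simp
  qed
  with pN Jp show ?thesis by blast
qed

end

theorem theorem1p1:
  fixes w :: "'v \<Rightarrow> 'v \<Rightarrow> real" and \<mu> a b :: "'v \<Rightarrow> real"
    and \<alpha> \<beta> lam :: real
  assumes "weighted_graph w" and "locally_finite w" and "connected_graph w"
    and "\<exists>\<mu>_min>0. \<forall>x. \<mu> x \<ge> \<mu>_min"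
    and "\<alpha> > 1" and "\<beta> > 1"
    and "cond_A1 w a b" and "cond_A2 w a b"
    and "lam > 0"
  shows "\<exists>p. weak_solution w \<mu> a b lam \<alpha> \<beta> p \<and> p \<in> nehari w \<mu> a b lam \<alpha> \<beta> \<and>
             J_lambda w \<mu> a b lam \<alpha> \<beta> p = c_nehari w \<mu> a b lam \<alpha> \<beta>"
proof -
  obtain \<mu>_min where "\<mu>_min > 0" "\<And>x. \<mu> x \<ge> \<mu>_min" using assms(4) by auto
  \<comment> \<open>\<open>(A\<^sub>1)\<close> is needed only for \<open>a, b \<ge> 0\<close>; the bounded zero sets matter only as \<open>\<lambda> \<rightarrow> \<infinity>\<close>.\<close>
  moreover have "\<And>x. a x \<ge> 0" "\<And>x. b x \<ge> 0" using assms(7) unfolding cond_A1_def by auto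
  ultimately interpret ground_state_setting w \<mu> a b lam \<alpha> \<beta> \<mu>_min
    using assms by unfold_locales auto
  show ?thesis by (rule ground_state_exists)
qed

end
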